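(* Let $1\le q\le\infty$, $s\in\mathbb R$. For $N\ge2$ and $R>0$ let $\phi_{0,N}$ on $\mathbb R$ be defined by $\mathcal F\phi_{0,N}=R\chi_{I_N}$, $I_N=[-N-1,-N+1]\cup[N-1,N+1]$. Then there exist $T_0>0$, $N_0\ge2$ and $c>0$ such that for all $N\ge N_0$, $R>0$ and $0<T\le T_0$, $$\|U_2[\phi_{0,N}](T)\|_{W^{2,q}_s}\ \ge\ \big\|\,\|\square_nU_2[\phi_{0,N}](T)(x)\langle n\rangle^s\|_{\ell^q(n=1)}\big\|_{L^2_x}\ \ge\ c\,R^2T,$$ where $\|a_n\|_{\ell^q(n=1)}=|a_1|$.
   Context: On $\mathbb R$: $\mathcal F$ the Fourier transform, $\langle n\rangle=(1+|n|^2)^{1/2}$. $\square_n=\mathcal F^{-1}\sigma_n\mathcal F$, $\sigma_n=\rho_n/\sum_{\ell\in\mathbb Z}\rho_\ell$, $\rho_n(\xi)=\rho(\xi-n)$, with $\rho\in\mathcal S(\mathbb R)$, $0\le\rho\le1$, $\rho=1$ for $|\xi|\le\frac12$, $\rho=0$ for $|\xi|\ge1$; $\|f\|_{W^{p,q}_s}=\big\|\,\|\square_nf(x)\langle n\rangle^s\|_{\ell^q_n(\mathbb Z)}\big\|_{L^p_x(\mathbb R)}$. With $\varphi(\xi)=\xi/(1+\xi^2)$, $U(t)=\mathcal F^{-1}e^{it\varphi(\xi)}\mathcal F$, $\mathcal N(u,v)(t)=\int_0^tU(t-\tau)\varphi(D_x)(uv)(\tau)\,d\tau$, the second Picard iterate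 is $U_2[u_0](t)=-\frac i2\mathcal N(U(\cdot)u_0,U(\cdot)u_0)(t)$. *)

theory Defs
  imports "HOL-Analysis.Analysis"
begin

definition schwartz :: "(real \<Rightarrow> real) \<Rightarrow> bool" where
  "schwartz f \<longleftrightarrow>
     (\<forall>j x. (deriv ^^ j) f differentiable (at x)) \<and>
     (\<forall>j k. bounded (range (\<lambda>x. x ^ k * (deriv ^^ j) f x)))"

definition admissible_rho :: "(real \<Rightarrow> real) \<Rightarrow> bool" where
  "admissible_rho \<rho> \<longleftrightarrow> schwartz \<rho> \<and> (\<forall>x. 0 \<le> \<rho> x \<and> \<rho> x \<le> 1)
     \<and> (\<forall>x. \<bar>x\<bar> \<le> 1/2 \<longrightarrow> \<rho> x = 1) \<and> (\<forall>x. \<bar>x\<bar> \<ge> 1 \<longrightarrow> \<rho> x = 0)"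

text \<open>Fourier transform and its inverse (convention: F f(xi) = int f(x) e^{-i x xi} dx),
  defined as limits of integrals over [-R,R] so that they also make sense for
  L^2-type functions such as phi_{0,N}; for integrable functions this is the usual integral.\<close>
definition fourier :: "(real \<Rightarrow> complex) \<Rightarrow> real \<Rightarrow> complex" where
  "fourier f \<xi> = Lim at_top (\<lambda>R::real. LINT x:{-R..R}|lborel. f x * cis (- (x * \<xi>)))"

definition ifourier :: "(real \<Rightarrow> complex) \<Rightarrow> real \<Rightarrow> complex" where
  "ifourier g x = Lim at_top (\<lambda>R::real. LINT \<xi>:{-R..R}|lborel. g \<xi> * cis (x * \<xi>)) / (2 * pi)"

definition fmult :: "(real \<Rightarrow> complex) \<Rightarrow> (real \<Rightarrow> complex) \<Rightarrow> real \<Rightarrow> complex" where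
  "fmult m f = ifourier (\<lambda>\<xi>. m \<xi> * fourier f \<xi>)"

definition japan :: "int \<Rightarrow> real" where
  "japan n = sqrt (1 + (real_of_int n)\<^sup>2)"

definition sigma :: "(real \<Rightarrow> real) \<Rightarrow> int \<Rightarrow> real \<Rightarrow> real" where
  "sigma \<rho> n \<xi> = \<rho> (\<xi> - of_int n) / infsum (\<lambda>l::int. \<rho> (\<xi> - of_int l)) UNIV"

definition box :: "(real \<Rightarrow> real) \<Rightarrow> int \<Rightarrow> (real \<Rightarrow> complex) \<Rightarrow> real \<Rightarrow> complex" where
  "box \<rho> n f = fmult (\<lambda>\<xi>. complex_of_real (sigma \<rho> n \<xi>)) f"

definition epowr :: "ennreal \<Rightarrow> real \<Rightarrow> ennreal" where
  "epowr x a = (if x = \<infinity> then \<infinity> else ennreal (enn2real x powr a))"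

definition lq_norm :: "ennreal \<Rightarrow> (int \<Rightarrow> real) \<Rightarrow> ennreal" where
  "lq_norm q a = (if q = \<infinity> then (SUP n. ennreal \<bar>a n\<bar>)
     else epowr (\<Sum>\<^sub>\<infinity> n. ennreal (\<bar>a n\<bar> powr enn2real q)) (1 / enn2real q))"

definition Lp_norm :: "real \<Rightarrow> (real \<Rightarrow> ennreal) \<Rightarrow> ennreal" where
  "Lp_norm p g = epowr (\<integral>\<^sup>+ x. epowr (g x) p \<partial>lborel) (1 / p)"

definition W_norm :: "(real \<Rightarrow> real) \<Rightarrow> real \<Rightarrow> ennreal \<Rightarrow> real \<Rightarrow> (real \<Rightarrow> complex) \<Rightarrow> ennreal" where
  "W_norm \<rho> p q s f = Lp_norm p (\<lambda>x. lq_norm q (\<lambda>n. cmod (box \<rho> n f x) * japan n powr s))"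

definition dispersion :: "real \<Rightarrow> real" where
  "dispersion \<xi> = \<xi> / (1 + \<xi>\<^sup>2)"

definition U :: "real \<Rightarrow> (real \<Rightarrow> complex) \<Rightarrow> real \<Rightarrow> complex" where
  "U t f = fmult (\<lambda>\<xi>. cis (t * dispersion \<xi>)) f"

definition phiD :: "(real \<Rightarrow> complex) \<Rightarrow> real \<Rightarrow> complex" where
  "phiD f = fmult (\<lambda>\<xi>. complex_of_real (dispersion \<xi>)) f"

definition duhamel :: "(real \<Rightarrow> real \<Rightarrow> complex) \<Rightarrow> (real \<Rightarrow> real \<Rightarrow> complex) \<Rightarrow> real \<Rightarrow> real \<Rightarrow> complex" where
  "duhamel u v t x = (LINT \<tau>:{0..t}|lborel. U (t - \<tau>) (phiD (\<lambda>y. u \<tau> y * v \<tau> y)) x)"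

definition U2 :: "(real \<Rightarrow> complex) \<Rightarrow> real \<Rightarrow> real \<Rightarrow> complex" where
  "U2 u0 t = (\<lambda>x. - (\<i> / 2) * duhamel (\<lambda>\<tau>. U \<tau> u0) (\<lambda>\<tau>. U \<tau> u0) t x)"

definition I_N :: "real \<Rightarrow> real set" where
  "I_N N = {-N-1..-N+1} \<union> {N-1..N+1}"

definition phi0 :: "real \<Rightarrow> real \<Rightarrow> real \<Rightarrow> complex" where
  "phi0 N R = ifourier (\<lambda>\<xi>. complex_of_real (R * indicator (I_N N) \<xi>))"

end

(* Everything is computed on the Fourier side. The Fourier transform of phi_{0,N} is R times the
   indicator of I_N, so U(tau) phi_{0,N}, its square, the Duhamel integrand and U_2[phi_{0,N}](T)
   are inverse Fourier integrals of explicit bounded, compactly supported densities. Since the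
   transforms are defined as limits of truncated integrals, each step uses Fourier inversion for
   such a density at a point where it is Lipschitz: Dirichlet's argument, with the
   Riemann-Lebesgue lemma for the remainder.

   The frequency-1 piece of U_2[phi_{0,N}](T) at x is, up to the factor -i/(4 pi), the integral
   of sigma_1(zeta) e^{i x zeta} against a density built from R^2 1_{I_N}(a) 1_{I_N}(zeta - a)
   and unimodular phases. For T <= 1/4 and |x| <= 1/8 all these phases have absolute value at
   most 1, so their cosines are at least 1/2; on [1/2, 1] moreover sigma_1 >= 1/2, phi >= 2/5
   and 1_{I_N} * 1_{I_N} >= 1. Hence |square_1 U_2[phi_{0,N}](T)(x)| >= R^2 T / (160 pi^2) for
   |x| <= 1/8 and every N, which gives the L^2 bound; the l^q norm dominates its n = 1 entry. *)

theory Submission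
  imports Defs "HOL-Probability.Sinc_Integral" "HOL-Probability.Characteristic_Functions"
begin

lemma integrable_bounded_compact_support:
  fixes f :: "real \<Rightarrow> 'a::{banach, second_countable_topology}"
  assumes "f \<in> borel_measurable borel" "\<And>x. norm (f x) \<le> C" "\<And>x. \<bar>x\<bar> > M \<Longrightarrow> f x = 0"
  shows "integrable lborel f"
proof (rule integrableI_bounded_set[where A="{-M..M}" and B=C])
  show "AE x in lborel. x \<notin> {-M..M} \<longrightarrow> f x = 0"
  proof (intro AE_I2 impI)
    fix x assume "x \<notin> {-M..M}"
    then have "\<bar>x\<bar> > M" by auto
    then show "f x = 0" by (rule assms(3))
  qed
qed (use assms(1,2) in \<open>simp_all add: emeasure_lborel_Icc_eq\<close>)

lemma integrable_pair_bounded_box: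
  fixes F :: "real \<times> real \<Rightarrow> 'a::{banach, second_countable_topology}"
  assumes "F \<in> borel_measurable (lborel \<Otimes>\<^sub>M lborel)" "\<And>p. norm (F p) \<le> C"
    and "\<And>p. p \<notin> {a..b} \<times> {c..d} \<Longrightarrow> F p = 0"
  shows "integrable (lborel \<Otimes>\<^sub>M lborel) F"
proof (rule integrableI_bounded_set[where A="{a..b} \<times> {c..d}" and B=C])
  show "emeasure (lborel \<Otimes>\<^sub>M lborel) ({a..b} \<times> {c..d}) < \<infinity>"
    by (simp add: lborel.emeasure_pair_measure_Times emeasure_lborel_Icc_eq ennreal_mult_less_top)
qed (use assms in simp_all)

lemma integrable_pair_indicator_bounded_compact_support:
  fixes H :: "real \<Rightarrow> real \<Rightarrow> 'a::{banach, second_countable_topology}"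
  assumes "(\<lambda>p. H (fst p) (snd p)) \<in> borel_measurable (lborel \<Otimes>\<^sub>M lborel)"
    and "\<And>\<tau> \<zeta>. norm (H \<tau> \<zeta>) \<le> C" "\<And>\<tau> \<zeta>. \<bar>\<zeta>\<bar> > M \<Longrightarrow> H \<tau> \<zeta> = 0"
  shows "integrable (lborel \<Otimes>\<^sub>M lborel) (\<lambda>(\<tau>, \<zeta>). indicator {a..b} \<tau> *\<^sub>R H \<tau> \<zeta>)"
proof (rule integrable_pair_bounded_box[where C=C and a=a and b=b and c="-M" and d=M])
  have [measurable]: "(\<lambda>p. H (fst p) (snd p)) \<in> borel_measurable (lborel \<Otimes>\<^sub>M lborel)" by (rule assms(1))
  show "(\<lambda>(\<tau>, \<zeta>). indicator {a..b} \<tau> *\<^sub>R H \<tau> \<zeta>) \<in> borel_measurable (lborel \<Otimes>\<^sub>M lborel)"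
    unfolding case_prod_beta by measurable
  show "norm ((\<lambda>(\<tau>, \<zeta>). indicator {a..b} \<tau> *\<^sub>R H \<tau> \<zeta>) p) \<le> C" for p
    using assms(2)[of "fst p" "snd p"] order_trans[OF norm_ge_zero assms(2)]
    by (cases p) (simp add: indicator_def)
  show "(\<lambda>(\<tau>, \<zeta>). indicator {a..b} \<tau> *\<^sub>R H \<tau> \<zeta>) p = 0" if p: "p \<notin> {a..b} \<times> {-M..M}" for p
  proof (cases p)
    case (Pair \<tau> \<zeta>)
    show ?thesis
    proof (cases "\<tau> \<in> {a..b}")
      case True
      then have "\<bar>\<zeta>\<bar> > M" using p Pair by auto
      then show ?thesis using Pair assms(3) by simp
    qed (simp add: Pair)
  qed
qed

lemma set_integral_norm_le:
  fixes f :: "real \<Rightarrow> 'a::{banach, second_countable_topology}"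
  assumes "f \<in> borel_measurable borel" "\<And>\<tau>. \<tau> \<in> {a..b} \<Longrightarrow> norm (f \<tau>) \<le> C" "a \<le> b"
  shows "norm (LINT \<tau>:{a..b}|lborel. f \<tau>) \<le> C * (b - a)"
proof -
  have int: "set_integrable lborel {a..b} f"
    unfolding set_integrable_def using assms(1,2)
    by (intro integrableI_bounded_set_indicator[where B=C]) (simp_all add: emeasure_lborel_Icc_eq)
  have "norm (LINT \<tau>:{a..b}|lborel. f \<tau>) \<le> (LINT \<tau>:{a..b}|lborel. norm (f \<tau>))"
    using int by (rule set_integral_norm_bound)
  also have "\<dots> \<le> (LINT \<tau>:{a..b}|lborel. C)"
  proof (rule set_integral_mono)
    show "set_integrable lborel {a..b} (\<lambda>\<tau>. norm (f \<tau>))" using int by (rule set_integrable_norm)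
    show "set_integrable lborel {a..b} (\<lambda>\<tau>. C)" by (rule borel_integrable_atLeastAtMost') simp
  qed (rule assms(2))
  also have "\<dots> = C * (b - a)" using assms(3) by (simp add: set_integral_const)
  finally show ?thesis .
qed

section \<open>The Riemann--Lebesgue lemma\<close>

lemma continuous_compact_support_ae_approx:
  fixes h :: "real \<Rightarrow> real"
  assumes hm: "h \<in> borel_measurable borel" and hb: "\<And>x. \<bar>h x\<bar> \<le> C"
    and hs: "\<And>x. \<bar>x\<bar> > M \<Longrightarrow> h x = 0"
  obtains k :: "nat \<Rightarrow> real \<Rightarrow> real" where "\<And>n. continuous_on UNIV (k n)"
    "\<And>n x. \<bar>x\<bar> > M + 1 \<Longrightarrow> k n x = 0" "\<And>n x. \<bar>k n x\<bar> \<le> C" "AE x in lborel. (\<lambda>n. k n x) \<longlonglongrightarrow> h x"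
proof -
  have C0: "0 \<le> C" using hb[of 0] by simp
  have "h \<in> borel_measurable lebesgue" using hm by (simp add: measurable_completion)
  then have "h measurable_on UNIV" by (rule lebesgue_measurable_imp_measurable_on_real) simp
  then obtain Z g where Z: "negligible Z" and gc: "\<And>n. continuous_on UNIV (g n)"
    and gl: "\<And>x. x \<notin> Z \<Longrightarrow> (\<lambda>n. g n x) \<longlonglongrightarrow> h x"
    unfolding measurable_on_def by auto
  define \<psi> where "\<psi> x = max 0 (min 1 (M + 1 - \<bar>x\<bar>))" for x :: real
  define k where "k n x = \<psi> x * max (-C) (min C (g n x))" for n x
  have kc: "continuous_on UNIV (k n)" for n
    unfolding k_def \<psi>_def by (intro continuous_intros gc)
  have ks: "\<bar>x\<bar> > M + 1 \<Longrightarrow> k n x = 0" for n x by (simp add: k_def \<psi>_def)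
  have kb: "\<bar>k n x\<bar> \<le> C" for n x
  proof -
    have "0 \<le> \<psi> x" "\<psi> x \<le> 1" by (auto simp: \<psi>_def)
    moreover have "\<bar>max (-C) (min C (g n x))\<bar> \<le> C" using C0 by auto
    ultimately have "\<bar>\<psi> x\<bar> * \<bar>max (-C) (min C (g n x))\<bar> \<le> 1 * C"
      by (intro mult_mono) auto
    then show ?thesis unfolding k_def abs_mult by simp
  qed
  have kl: "(\<lambda>n. k n x) \<longlonglongrightarrow> h x" if "x \<notin> Z" for x
  proof -
    have "(\<lambda>n. k n x) \<longlonglongrightarrow> \<psi> x * max (-C) (min C (h x))"
      unfolding k_def by (intro tendsto_intros gl that)
    moreover have "\<psi> x * max (-C) (min C (h x)) = h x"
    proof (cases "\<bar>x\<bar> > M")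
      case True then show ?thesis using hs[OF True] C0 by simp
    next
      case False then have "\<psi> x = 1" by (simp add: \<psi>_def)
      then show ?thesis using hb[of x] by (simp add: abs_le_iff)
    qed
    ultimately show ?thesis by simp
  qed
  have "AE x in lebesgue. x \<notin> Z" using Z by (simp add: negligible_iff_null_sets AE_not_in)
  then have "AE x in lborel. x \<notin> Z" by (simp add: AE_completion_iff)
  then have "AE x in lborel. (\<lambda>n. k n x) \<longlonglongrightarrow> h x" by eventually_elim (rule kl)
  with kc ks kb show ?thesis by (rule that)
qed

lemma continuous_compact_support_L1_approx:
  fixes h :: "real \<Rightarrow> real"
  assumes hm: "h \<in> borel_measurable borel" and hb: "\<And>x. \<bar>h x\<bar> \<le> C"
    and hs: "\<And>x. \<bar>x\<bar> > M \<Longrightarrow> h x = 0" and e: "e > 0"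
  obtains g where "continuous_on UNIV g" "\<And>x. \<bar>x\<bar> > M + 1 \<Longrightarrow> g x = 0" "\<And>x. \<bar>g x\<bar> \<le> C"
    "(LBINT x. \<bar>h x - g x\<bar>) < e"
proof -
  have C0: "0 \<le> C" using hb[of 0] by simp
  obtain k where kc: "\<And>n. continuous_on UNIV (k n)" and ks: "\<And>n x. \<bar>x\<bar> > M + 1 \<Longrightarrow> k n x = 0"
    and kb: "\<And>n x. \<bar>k n x\<bar> \<le> C" and kl: "AE x in lborel. (\<lambda>n. k n x) \<longlonglongrightarrow> h x"
    using continuous_compact_support_ae_approx[OF hm hb hs] by blast
  have [measurable]: "k n \<in> borel_measurable borel" for n
    using kc by (rule borel_measurable_continuous_onI)
  have "(\<lambda>n. LBINT x. \<bar>h x - k n x\<bar>) \<longlonglongrightarrow> (LBINT (x::real). 0)"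
  proof (rule integral_dominated_convergence[where w="\<lambda>x. 2 * C * indicator {-(M+1)..M+1} x"])
    show "(\<lambda>x. \<bar>h x - k n x\<bar>) \<in> borel_measurable lborel" for n
      using hm by simp
    show "AE x in lborel. (\<lambda>n. \<bar>h x - k n x\<bar>) \<longlonglongrightarrow> 0"
      using kl
    proof eventually_elim
      case (elim x)
      then have "(\<lambda>n. \<bar>h x - k n x\<bar>) \<longlonglongrightarrow> \<bar>h x - h x\<bar>" by (intro tendsto_intros)
      then show ?case by simp
    qed
    show "AE x in lborel. norm \<bar>h x - k n x\<bar> \<le> 2 * C * indicator {- (M + 1)..M + 1} x" for n
    proof (rule AE_I2)
      fix x show "norm \<bar>h x - k n x\<bar> \<le> 2 * C * indicator {- (M + 1)..M + 1} x"
      proof (cases "\<bar>x\<bar> > M + 1")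
        case True then show ?thesis using hs[of x] ks[of x n] C0 by (simp add: indicator_def)
      next
        case False then have "x \<in> {-(M+1)..M+1}" by auto
        then show ?thesis using hb[of x] kb[of n x] by (simp add: indicator_def abs_le_iff)
      qed
    qed
    show "integrable lborel (\<lambda>x. 2 * C * indicator {-(M+1)..M+1} x :: real)"
      by (intro integrable_mult_right integrable_real_indicator) (simp_all add: emeasure_lborel_Icc_eq)
  qed simp
  then have "(\<lambda>n. LBINT x. \<bar>h x - k n x\<bar>) \<longlonglongrightarrow> 0" by simp
  from order_tendstoD(2)[OF this e] obtain n where "(LBINT x. \<bar>h x - k n x\<bar>) < e"
    by (auto simp: eventually_sequentially)
  with kc ks kb show ?thesis by (rule that)
qed

lemma uniformly_continuous_compact_support:
  fixes g :: "real \<Rightarrow> real"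
  assumes gc: "continuous_on UNIV g" and gs: "\<And>x. \<bar>x\<bar> > M \<Longrightarrow> g x = 0" and e: "e > 0"
  obtains d where "d > 0" "\<And>x y. \<bar>x - y\<bar> < d \<Longrightarrow> \<bar>g x - g y\<bar> < e"
proof -
  have "uniformly_continuous_on (cball 0 (\<bar>M\<bar> + 1)) g"
    by (rule compact_uniformly_continuous) (use gc continuous_on_subset in auto)
  then obtain d where d: "d > 0" and
    dc: "\<And>x y. x \<in> cball 0 (\<bar>M\<bar> + 1) \<Longrightarrow> y \<in> cball 0 (\<bar>M\<bar> + 1) \<Longrightarrow> dist y x < d \<Longrightarrow> dist (g y) (g x) < e"
    unfolding uniformly_continuous_on_def using e by metis
  show ?thesis
  proof (rule that[of "min d 1"])
    fix x y :: real assume xy: "\<bar>x - y\<bar> < min d 1"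
    show "\<bar>g x - g y\<bar> < e"
    proof (cases "\<bar>x\<bar> \<le> \<bar>M\<bar> + 1 \<and> \<bar>y\<bar> \<le> \<bar>M\<bar> + 1")
      case True then show ?thesis using dc[of y x] xy by (auto simp: dist_real_def)
    next
      case False then have "\<bar>x\<bar> > M \<and> \<bar>y\<bar> > M" using xy by auto
      then show ?thesis using gs e by auto
    qed
  qed (use d in auto)
qed

lemma abs_mult_le_of_abs_le_one: "\<bar>a::real\<bar> \<le> C \<Longrightarrow> \<bar>b\<bar> \<le> 1 \<Longrightarrow> \<bar>a * b\<bar> \<le> C"
  by (metis abs_ge_zero abs_mult mult_le_one mult.commute mult_left_le order_trans)

lemma integral_mult_sin_half_period_shift:
  fixes g :: "real \<Rightarrow> real"
  assumes "L \<noteq> 0" "integrable lborel (\<lambda>w. g w * sin (L * w))"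
    and "integrable lborel (\<lambda>w. g (pi / L + w) * sin (L * w))"
  shows "2 * (LBINT w. g w * sin (L * w)) = (LBINT w. (g w - g (pi / L + w)) * sin (L * w))"
proof -
  have "(LBINT w. g w * sin (L * w)) = (LBINT w. g (pi / L + w) * sin (L * (pi / L + w)))"
    using lborel_integral_real_affine[of 1 "\<lambda>w. g w * sin (L * w)" "pi / L"] by simp
  also have "\<dots> = - (LBINT w. g (pi / L + w) * sin (L * w))"
  proof -
    have "L * (pi / L + w) = L * w + pi" for w using assms(1) by (simp add: field_simps)
    then show ?thesis by (simp add: sin_periodic_pi)
  qed
  finally show ?thesis using assms(2,3) by (simp add: left_diff_distrib)
qed

lemma abs_integral_mult_sin_le:
  fixes g :: "real \<Rightarrow> real"
  assumes gm: "g \<in> borel_measurable borel" and gb: "\<And>x. \<bar>g x\<bar> \<le> C"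
    and gs: "\<And>x. \<bar>x\<bar> > M \<Longrightarrow> g x = 0" and M0: "0 \<le> M" and L: "L > 0" "pi / L \<le> 1"
    and osc: "\<And>w. \<bar>g w - g (pi / L + w)\<bar> \<le> \<epsilon>"
  shows "\<bar>LBINT w. g w * sin (L * w)\<bar> \<le> \<epsilon> * (M + 1)"
proof -
  have int_shift: "integrable lborel (\<lambda>w. g (c + w) * sin (L * w))" for c
    by (rule integrable_bounded_compact_support[where C=C and M="M + \<bar>c\<bar>"])
       (use gm gb gs in \<open>auto intro!: abs_mult_le_of_abs_le_one\<close>)
  have "2 * (LBINT w. g w * sin (L * w)) = (LBINT w. (g w - g (pi / L + w)) * sin (L * w))"
    using L int_shift[of 0] int_shift[of "pi / L"] by (intro integral_mult_sin_half_period_shift) simp_all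
  also have "\<bar>\<dots>\<bar> \<le> (LBINT w. \<bar>(g w - g (pi / L + w)) * sin (L * w)\<bar>)"
    by (rule integral_abs_bound)
  also have "\<dots> \<le> (LBINT w. \<epsilon> * indicator {-(M+1)..M+1} w)"
  proof (rule integral_mono)
    show "integrable lborel (\<lambda>w. \<bar>(g w - g (pi / L + w)) * sin (L * w)\<bar>)"
      using int_shift[of 0] int_shift[of "pi / L"] by (simp add: left_diff_distrib)
    show "integrable lborel (\<lambda>w. \<epsilon> * indicator {-(M+1)..M+1} w)"
      by (intro integrable_mult_right integrable_real_indicator) (simp_all add: emeasure_lborel_Icc_eq)
    fix w :: real
    show "\<bar>(g w - g (pi / L + w)) * sin (L * w)\<bar> \<le> \<epsilon> * indicator {-(M+1)..M+1} w"
    proof (cases "\<bar>w\<bar> > M + 1")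
      case True
      moreover have "0 < pi / L" using L by simp
      ultimately have "M < \<bar>pi / L + w\<bar>" using L(2) by arith
      moreover have "w \<notin> {-(M+1)..M+1}" using True by auto
      ultimately show ?thesis using True gs[of w] gs[of "pi / L + w"] by simp
    next
      case False
      have "\<bar>(g w - g (pi / L + w)) * sin (L * w)\<bar> \<le> \<epsilon>"
        using osc by (rule abs_mult_le_of_abs_le_one) simp
      then show ?thesis using False by (auto simp: indicator_def)
    qed
  qed
  also have "\<dots> = \<epsilon> * (2 * M + 2)"
    using M0 by (simp add: emeasure_lborel_Icc_eq)
  finally show ?thesis by (simp add: abs_mult algebra_simps)
qed

lemma riemann_lebesgue_sin_continuous:
  fixes g :: "real \<Rightarrow> real"
  assumes gc: "continuous_on UNIV g" and gb: "\<And>x. \<bar>g x\<bar> \<le> C"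
    and gs: "\<And>x. \<bar>x\<bar> > M \<Longrightarrow> g x = 0" and M0: "0 \<le> M"
  shows "((\<lambda>L. LBINT w. g w * sin (L * w)) \<longlongrightarrow> 0) at_top"
proof (rule tendstoI)
  have gm: "g \<in> borel_measurable borel" using gc by (rule borel_measurable_continuous_onI)
  fix e :: real assume e: "e > 0"
  define e' where "e' = e / (2 * M + 4)"
  have e': "e' > 0" using e M0 by (simp add: e'_def)
  obtain d where d: "d > 0" "\<And>x y. \<bar>x - y\<bar> < d \<Longrightarrow> \<bar>g x - g y\<bar> < e'"
    using uniformly_continuous_compact_support[OF gc gs e'] by blast
  show "\<forall>\<^sub>F L in at_top. dist (LBINT w. g w * sin (L * w)) 0 < e"
  proof (rule eventually_mono[OF eventually_gt_at_top[of "pi / min d 1"]])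
    fix L :: real assume L: "pi / min d 1 < L"
    have md: "min d 1 > 0" using d(1) by simp
    then have Lpos: "L > 0" using L by (smt (verit) divide_pos_pos pi_gt_zero)
    have "pi < L * min d 1" using L md by (simp add: pos_divide_less_eq)
    moreover have "L * min d 1 \<le> L * d" "L * min d 1 \<le> L * 1"
      using Lpos by (intro mult_left_mono; simp)+
    ultimately have "pi < L * d" "pi < L" by linarith+
    then have "pi / L < d" "pi / L \<le> 1" using Lpos by (simp_all add: field_simps)
    then have "\<bar>g w - g (pi / L + w)\<bar> \<le> e'" for w
      using d(2)[of w "pi / L + w"] Lpos by simp
    then have "\<bar>LBINT w. g w * sin (L * w)\<bar> \<le> e' * (M + 1)"
      using Lpos \<open>pi / L \<le> 1\<close> by (intro abs_integral_mult_sin_le[OF gm gb gs M0]) simp_all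
    also have "\<dots> < e"
    proof -
      have "e * (M + 1) < e * (2 * M + 4)" using e M0 by (intro mult_strict_left_mono) auto
      then show ?thesis using M0 by (simp add: e'_def pos_divide_less_eq)
    qed
    finally show "dist (LBINT w. g w * sin (L * w)) 0 < e" by simp
  qed
qed

lemma riemann_lebesgue_sin:
  fixes h :: "real \<Rightarrow> real"
  assumes hm: "h \<in> borel_measurable borel" and hb: "\<And>x. \<bar>h x\<bar> \<le> C"
    and hs: "\<And>x. \<bar>x\<bar> > M \<Longrightarrow> h x = 0"
  shows "((\<lambda>L. LBINT w. h w * sin (L * w)) \<longlongrightarrow> 0) at_top"
proof (rule tendstoI)
  fix e :: real assume e: "e > 0"
  have hs': "\<bar>x\<bar> > \<bar>M\<bar> \<Longrightarrow> h x = 0" for x using hs[of x] by simp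
  obtain g where gc: "continuous_on UNIV g" and gs: "\<And>x. \<bar>x\<bar> > \<bar>M\<bar> + 1 \<Longrightarrow> g x = 0"
    and gb: "\<And>x. \<bar>g x\<bar> \<le> C" and gi: "(LBINT x. \<bar>h x - g x\<bar>) < e/2"
    using continuous_compact_support_L1_approx[OF hm hb hs' half_gt_zero[OF e]] by blast
  have gm: "g \<in> borel_measurable borel" using gc by (rule borel_measurable_continuous_onI)
  have "0 \<le> \<bar>M\<bar> + 1" by simp
  from tendstoD[OF riemann_lebesgue_sin_continuous[OF gc gb gs this] half_gt_zero[OF e]]
  have "\<forall>\<^sub>F L in at_top. dist (LBINT w. g w * sin (L * w)) 0 < e/2" .
  then show "\<forall>\<^sub>F L in at_top. dist (LBINT w. h w * sin (L * w)) 0 < e"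
  proof eventually_elim
    case (elim L)
    have i1: "integrable lborel (\<lambda>w. h w * sin (L * w))"
      by (rule integrable_bounded_compact_support[where C=C and M=M])
         (use hm hb hs in \<open>auto intro!: abs_mult_le_of_abs_le_one\<close>)
    have i2: "integrable lborel (\<lambda>w. g w * sin (L * w))"
      by (rule integrable_bounded_compact_support[where C=C and M="\<bar>M\<bar>+1"])
         (use gm gb gs in \<open>auto intro!: abs_mult_le_of_abs_le_one\<close>)
    have "\<bar>LBINT w. (h w - g w) * sin (L * w)\<bar> \<le> (LBINT w. \<bar>(h w - g w) * sin (L * w)\<bar>)"
      by (rule integral_abs_bound)
    also have "\<dots> \<le> (LBINT w. \<bar>h w - g w\<bar>)"
    proof (rule integral_mono)
      show "integrable lborel (\<lambda>w. \<bar>(h w - g w) * sin (L * w)\<bar>)"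
        using i1 i2 by (simp add: left_diff_distrib)
      show "integrable lborel (\<lambda>w. \<bar>h w - g w\<bar>)"
      proof (rule integrable_bounded_compact_support[where C="2 * C" and M="\<bar>M\<bar> + 1"])
        show "norm \<bar>h w - g w\<bar> \<le> 2 * C" for w using hb[of w] gb[of w] by simp
        show "\<bar>h w - g w\<bar> = 0" if "\<bar>w\<bar> > \<bar>M\<bar> + 1" for w using that hs'[of w] gs[of w] by simp
      qed (use hm gm in simp)
    qed (auto intro!: abs_mult_le_of_abs_le_one)
    finally have "\<bar>LBINT w. (h w - g w) * sin (L * w)\<bar> < e/2" using gi by linarith
    moreover have "(LBINT w. h w * sin (L * w)) = (LBINT w. (h w - g w) * sin (L * w)) + (LBINT w. g w * sin (L * w))"
      using i1 i2 by (simp add: left_diff_distrib)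
    ultimately show ?case using elim by (simp add: dist_real_def)
  qed
qed

section \<open>Fourier inversion and Fourier multipliers\<close>

definition bounded_compact_support :: "(real \<Rightarrow> complex) \<Rightarrow> bool" where
  "bounded_compact_support B \<longleftrightarrow> B \<in> borel_measurable borel \<and>
     (\<exists>C. \<forall>\<zeta>. cmod (B \<zeta>) \<le> C) \<and> (\<exists>M. \<forall>\<zeta>. \<bar>\<zeta>\<bar> > M \<longrightarrow> B \<zeta> = 0)"

lemma bounded_compact_supportI:
  "B \<in> borel_measurable borel \<Longrightarrow> (\<And>\<zeta>. cmod (B \<zeta>) \<le> C) \<Longrightarrow> (\<And>\<zeta>. \<bar>\<zeta>\<bar> > M \<Longrightarrow> B \<zeta> = 0)
    \<Longrightarrow> bounded_compact_support B"
  unfolding bounded_compact_support_def by blast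

lemma bounded_compact_supportE:
  assumes "bounded_compact_support B"
  obtains C M where "B \<in> borel_measurable borel" "\<And>\<zeta>. cmod (B \<zeta>) \<le> C"
    "\<And>\<zeta>. \<bar>\<zeta>\<bar> > M \<Longrightarrow> B \<zeta> = 0" "0 \<le> C" "0 \<le> M"
proof -
  obtain C M where "B \<in> borel_measurable borel" "\<And>\<zeta>. cmod (B \<zeta>) \<le> C" "\<And>\<zeta>. \<bar>\<zeta>\<bar> > M \<Longrightarrow> B \<zeta> = 0"
    using assms unfolding bounded_compact_support_def by blast
  moreover have "0 \<le> C" using calculation(2)[of 0] norm_ge_zero order_trans by blast
  moreover have "\<And>\<zeta>. \<bar>\<zeta>\<bar> > max M 0 \<Longrightarrow> B \<zeta> = 0" using calculation(3) by auto
  ultimately show ?thesis using that[of C "max M 0"] by auto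
qed

lemma bounded_compact_support_integrable: "bounded_compact_support B \<Longrightarrow> integrable lborel B"
  by (metis bounded_compact_supportE integrable_bounded_compact_support)

lemma bounded_compact_support_mult:
  assumes "bounded_compact_support B" "m \<in> borel_measurable borel" "\<And>\<zeta>. cmod (m \<zeta>) \<le> D"
  shows "bounded_compact_support (\<lambda>\<zeta>. m \<zeta> * B \<zeta>)"
proof -
  obtain C M where B: "B \<in> borel_measurable borel" "\<And>\<zeta>. cmod (B \<zeta>) \<le> C"
    "\<And>\<zeta>. \<bar>\<zeta>\<bar> > M \<Longrightarrow> B \<zeta> = 0" "0 \<le> C" using bounded_compact_supportE[OF assms(1)] by metis
  show ?thesis
  proof (rule bounded_compact_supportI[where C="D * C" and M=M])
    show "(\<lambda>\<zeta>. m \<zeta> * B \<zeta>) \<in> borel_measurable borel" using B(1) assms(2) by measurable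
    show "cmod (m \<zeta> * B \<zeta>) \<le> D * C" for \<zeta>
      unfolding norm_mult by (rule mult_mono) (use assms(3) B order_trans[OF norm_ge_zero assms(3)] in auto)
  qed (use B in auto)
qed

lemma riemann_lebesgue_sin_complex:
  assumes "bounded_compact_support h"
  shows "((\<lambda>L. LINT w|lborel. h w * complex_of_real (sin (L * w))) \<longlongrightarrow> 0) at_top"
proof -
  obtain C M where hm[measurable]: "h \<in> borel_measurable borel" and hb: "\<And>x. cmod (h x) \<le> C"
    and hs: "\<And>x. \<bar>x\<bar> > M \<Longrightarrow> h x = 0" using bounded_compact_supportE[OF assms] by metis
  have re: "((\<lambda>L. LBINT w. Re (h w) * sin (L * w)) \<longlongrightarrow> 0) at_top"
    by (rule riemann_lebesgue_sin[where C=C and M=M]) (use hs in \<open>auto intro: order_trans[OF abs_Re_le_cmod hb]\<close>)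
  have im: "((\<lambda>L. LBINT w. Im (h w) * sin (L * w)) \<longlongrightarrow> 0) at_top"
    by (rule riemann_lebesgue_sin[where C=C and M=M]) (use hs in \<open>auto intro: order_trans[OF abs_Im_le_cmod hb]\<close>)
  have "(LINT w|lborel. h w * complex_of_real (sin (L * w))) =
      complex_of_real (LBINT w. Re (h w) * sin (L * w)) + \<i> * complex_of_real (LBINT w. Im (h w) * sin (L * w))" for L
  proof -
    have int: "integrable lborel (\<lambda>w. h w * complex_of_real (sin (L * w)))"
    proof (rule integrable_bounded_compact_support[where C=C and M=M])
      show "cmod (h w * complex_of_real (sin (L * w))) \<le> C" for w
        unfolding norm_mult norm_of_real by (rule order_trans[OF mult_left_le]) (use hb in auto)
    qed (use hs in auto)
    then show ?thesis using integral_Re[OF int] integral_Im[OF int] by (simp add: complex_eq_iff)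
  qed
  moreover have "((\<lambda>L. complex_of_real (LBINT w. Re (h w) * sin (L * w)) +
      \<i> * complex_of_real (LBINT w. Im (h w) * sin (L * w))) \<longlongrightarrow> of_real 0 + \<i> * of_real 0) at_top"
    by (intro tendsto_intros re im)
  ultimately show ?thesis by simp
qed

lemma set_integral_cis_symmetric:
  fixes L w :: real
  assumes "w \<noteq> 0" "0 \<le> L"
  shows "(LINT x:{-L..L}|lborel. cis (x * w)) = complex_of_real (2 * sin (L * w) / w)"
proof -
  have "(LINT x=ereal (-L)..ereal L|lborel. cis (x * w)) =
      Complex (sin (L * w) / w) (- cos (L * w) / w) - Complex (sin (-L * w) / w) (- cos (-L * w) / w)"
  proof (rule interval_integral_FTC_finite)
    show "continuous_on {min (-L) L..max (-L) L} (\<lambda>x. cis (x * w))" by (intro continuous_intros)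
    show "((\<lambda>x. Complex (sin (x * w) / w) (- cos (x * w) / w)) has_vector_derivative cis (x * w))
        (at x within {min (-L) L..max (-L) L})" for x
      using assms(1) unfolding has_vector_derivative_complex_iff
      by (auto intro!: derivative_eq_intros simp: has_real_derivative_iff_has_vector_derivative[symmetric])
  qed
  also have "\<dots> = complex_of_real (2 * sin (L * w) / w)" by (simp add: complex_eq_iff)
  finally show ?thesis using assms(2) by (simp add: interval_integral_Icc)
qed

lemma abs_dirichlet_kernel_le:
  fixes L w :: real
  shows "\<bar>2 * sin (L * w) / w\<bar> \<le> 2 * \<bar>L\<bar>"
proof (cases "w = 0")
  case False
  have "\<bar>sin (L * w)\<bar> \<le> \<bar>L * w\<bar>" by (rule abs_sin_x_le_abs_x)
  then show ?thesis using False by (simp add: abs_mult divide_le_eq)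
qed simp

lemma integral_dirichlet_kernel:
  fixes L :: real
  assumes "L > 0"
  shows "(LBINT w. indicator {-1..1} w * (2 * sin (L * w) / w)) = 4 * Si L"
proof -
  define g where "g w = sin (w * L) / w" for w
  have gb: "\<bar>g w\<bar> \<le> L" for w
  proof (cases "w = 0")
    case False
    have "\<bar>sin (w * L)\<bar> \<le> L * \<bar>w\<bar>" using abs_sin_x_le_abs_x[of "w*L"] assms by (simp add: abs_mult mult.commute)
    then show ?thesis using False by (simp add: g_def abs_divide pos_divide_le_eq)
  qed (use assms in \<open>simp add: g_def\<close>)
  have gm: "g \<in> borel_measurable borel" unfolding g_def by measurable
  have int: "integrable lborel (\<lambda>w. indicator {a..b} w * g w)" for a b :: real
    by (rule integrable_bounded_compact_support[where C=L and M="\<bar>a\<bar>+\<bar>b\<bar>"])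
       (use gm gb assms in \<open>auto simp: indicator_def abs_mult\<close>)
  have pos: "(LBINT w. indicator {0..1} w * g w) = Si L"
  proof -
    have "(LBINT t=ereal 0..ereal 1. sin (t * L) / t) = Si L"
      using LBINT_I0c_sin_scale_divide[of 1 L] assms by (simp add: zero_ereal_def)
    then show ?thesis by (simp add: interval_integral_Icc set_lebesgue_integral_def g_def)
  qed
  have neg: "(LBINT w. indicator {-1..0} w * g w) = (LBINT w. indicator {0..1} w * g w)"
  proof -
    have "(LBINT w. indicator {-1..0} w * g w) = (LBINT x. indicator {-1..0} (-x) * g (-x))"
      using lborel_integral_real_affine[of "-1" "\<lambda>w. indicator {-1..0} w * g w" 0] by simp
    also have "\<dots> = (LBINT w. indicator {0..1} w * g w)"
      by (rule Bochner_Integration.integral_cong) (auto simp: indicator_def g_def)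
    finally show ?thesis .
  qed
  have "indicator {-1..1} w * (2 * sin (L * w) / w) = 2 * (indicator {-1..0} w * g w + indicator {0..1} w * g w)"
    for w :: real
    by (cases "w = 0") (auto simp: indicator_def g_def mult.commute)
  then have "(LBINT w. indicator {-1..1} w * (2 * sin (L * w) / w)) =
      2 * ((LBINT w. indicator {-1..0} w * g w) + (LBINT w. indicator {0..1} w * g w))"
    using int by simp
  then show ?thesis using pos neg by simp
qed

definition ifourier_integral :: "(real \<Rightarrow> complex) \<Rightarrow> real \<Rightarrow> complex" where
  "ifourier_integral B x = (LINT \<zeta>|lborel. B \<zeta> * cis (x * \<zeta>)) / (2 * pi)"

lemma borel_measurable_cis[measurable]: "cis \<in> borel_measurable borel"
  by (intro borel_measurable_continuous_onI continuous_intros)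

lemma ifourier_eq_ifourier_integral:
  assumes "bounded_compact_support B"
  shows "ifourier B x = ifourier_integral B x"
proof -
  obtain C M where B: "\<And>\<zeta>. \<bar>\<zeta>\<bar> > M \<Longrightarrow> B \<zeta> = 0"
    using bounded_compact_supportE[OF assms] by metis
  have "\<forall>\<^sub>F R in at_top. (LINT \<xi>:{-R..R}|lborel. B \<xi> * cis (x * \<xi>)) = (LINT \<xi>|lborel. B \<xi> * cis (x * \<xi>))"
  proof (rule eventually_mono[OF eventually_ge_at_top[of M]])
    fix R assume "M \<le> R"
    then show "(LINT \<xi>:{-R..R}|lborel. B \<xi> * cis (x * \<xi>)) = (LINT \<xi>|lborel. B \<xi> * cis (x * \<xi>))"
      unfolding set_lebesgue_integral_def
      by (intro Bochner_Integration.integral_cong) (auto simp: indicator_def B)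
  qed
  then have "((\<lambda>R. LINT \<xi>:{-R..R}|lborel. B \<xi> * cis (x * \<xi>)) \<longlongrightarrow> (LINT \<xi>|lborel. B \<xi> * cis (x * \<xi>))) at_top"
    by (rule tendsto_eventually)
  then show ?thesis unfolding ifourier_def ifourier_integral_def by (simp add: tendsto_Lim)
qed

lemma set_integral_ifourier_integral_cis:
  assumes "bounded_compact_support B" "0 \<le> L"
  shows "(LINT x:{-L..L}|lborel. ifourier_integral B x * cis (-(x * \<xi>))) =
    (LINT w|lborel. B (\<xi> + w) * complex_of_real (2 * sin (L * w) / w)) / (2 * pi)"
proof -
  obtain C M where Bm[measurable]: "B \<in> borel_measurable borel" and Bb: "\<And>\<zeta>. cmod (B \<zeta>) \<le> C"
    and Bs: "\<And>\<zeta>. \<bar>\<zeta>\<bar> > M \<Longrightarrow> B \<zeta> = 0" using bounded_compact_supportE[OF assms(1)] by metis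
  define F where "F x \<zeta> = indicator {-L..L} x *\<^sub>R (B \<zeta> * cis (x * (\<zeta> - \<xi>)))" for x \<zeta>
  have intF: "integrable (lborel \<Otimes>\<^sub>M lborel) (\<lambda>(x, \<zeta>). F x \<zeta>)"
    unfolding F_def
    by (rule integrable_pair_indicator_bounded_compact_support[where C=C and M=M])
       (simp_all add: norm_mult Bb Bs)
  have "indicator {-L..L} x *\<^sub>R (ifourier_integral B x * cis (-(x * \<xi>))) = (LINT \<zeta>|lborel. F x \<zeta>) / (2 * pi)"
    for x
  proof -
    have "ifourier_integral B x * cis (-(x * \<xi>)) = (LINT \<zeta>|lborel. B \<zeta> * cis (x * \<zeta>) * cis (-(x * \<xi>))) / (2 * pi)"
      unfolding ifourier_integral_def by simp
    also have "\<dots> = (LINT \<zeta>|lborel. B \<zeta> * cis (x * (\<zeta> - \<xi>))) / (2 * pi)"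
      by (simp add: cis_mult mult.assoc right_diff_distrib)
    finally show ?thesis unfolding F_def by (simp add: scaleR_conv_of_real)
  qed
  then have "(LINT x:{-L..L}|lborel. ifourier_integral B x * cis (-(x * \<xi>))) =
      (LINT x|lborel. LINT \<zeta>|lborel. F x \<zeta>) / (2 * pi)"
    unfolding set_lebesgue_integral_def by simp
  also have "(LINT x|lborel. LINT \<zeta>|lborel. F x \<zeta>) = (LINT \<zeta>|lborel. LINT x|lborel. F x \<zeta>)"
    using lborel_pair.Fubini_integral[OF intF] by simp
  also have "\<dots> = (LINT \<zeta>|lborel. B \<zeta> * complex_of_real (2 * sin (L * (\<zeta> - \<xi>)) / (\<zeta> - \<xi>)))"
  proof (rule integral_discrete_difference[where X="{\<xi>}"])
    fix \<zeta> assume "\<zeta> \<notin> {\<xi>}"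
    have "(LINT x|lborel. F x \<zeta>) = B \<zeta> * (LINT x:{-L..L}|lborel. cis (x * (\<zeta> - \<xi>)))"
      unfolding F_def set_lebesgue_integral_def by (simp add: mult.commute mult.left_commute scaleR_conv_of_real)
    then show "(LINT x|lborel. F x \<zeta>) = B \<zeta> * complex_of_real (2 * sin (L * (\<zeta> - \<xi>)) / (\<zeta> - \<xi>))"
      using set_integral_cis_symmetric[of "\<zeta> - \<xi>" L] \<open>\<zeta> \<notin> {\<xi>}\<close> assms(2) by simp
  qed auto
  also have "\<dots> = (LINT w|lborel. B (\<xi> + w) * complex_of_real (2 * sin (L * w) / w))"
    using lborel_integral_real_affine[of 1 "\<lambda>\<zeta>. B \<zeta> * complex_of_real (2 * sin (L * (\<zeta> - \<xi>)) / (\<zeta> - \<xi>))" \<xi>]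
    by simp
  finally show ?thesis .
qed

definition dirichlet_remainder :: "(real \<Rightarrow> complex) \<Rightarrow> real \<Rightarrow> real \<Rightarrow> complex" where
  "dirichlet_remainder B \<xi> w = (B (\<xi> + w) - B \<xi> * indicator {-1..1} w) / w"

lemma bounded_compact_support_dirichlet_remainder:
  assumes "bounded_compact_support B" and lip: "\<And>\<zeta>. cmod (B \<zeta> - B \<xi>) \<le> K * \<bar>\<zeta> - \<xi>\<bar>"
  shows "bounded_compact_support (dirichlet_remainder B \<xi>)"
proof -
  obtain C M where Bm[measurable]: "B \<in> borel_measurable borel" and Bb: "\<And>\<zeta>. cmod (B \<zeta>) \<le> C"
    and Bs: "\<And>\<zeta>. \<bar>\<zeta>\<bar> > M \<Longrightarrow> B \<zeta> = 0" and C0: "0 \<le> C" and M0: "0 \<le> M"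
    using bounded_compact_supportE[OF assms(1)] by metis
  show ?thesis
  proof (rule bounded_compact_supportI[where C="\<bar>K\<bar> + C" and M="M + \<bar>\<xi>\<bar> + 1"])
    fix w :: real
    have "cmod ((B (\<xi> + w) - B \<xi> * indicator {-1..1} w) / w) \<le> \<bar>K\<bar> + C"
    proof (cases "w = 0")
      case True then show ?thesis using C0 by simp
    next
      case False
      show ?thesis
      proof (cases "\<bar>w\<bar> \<le> 1")
        case True
        then have "w \<in> {-1..1}" by auto
        then have "cmod ((B (\<xi> + w) - B \<xi> * indicator {-1..1} w) / w) = cmod (B (\<xi> + w) - B \<xi>) / \<bar>w\<bar>"
          by (simp add: norm_divide)
        also have "\<dots> \<le> K" using lip[of "\<xi> + w"] False by (simp add: pos_divide_le_eq)
        finally show ?thesis using C0 by linarith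
      next
        case False
        then have "w \<notin> {-1..1}" by auto
        then have "cmod ((B (\<xi> + w) - B \<xi> * indicator {-1..1} w) / w) = cmod (B (\<xi> + w)) / \<bar>w\<bar>"
          by (simp add: norm_divide)
        also have "\<dots> \<le> cmod (B (\<xi> + w))"
          using False mult_left_mono[of 1 "\<bar>w\<bar>" "cmod (B (\<xi> + w))"] by (simp add: divide_le_eq)
        finally show ?thesis using Bb[of "\<xi> + w"] by linarith
      qed
    qed
    then show "cmod (dirichlet_remainder B \<xi> w) \<le> \<bar>K\<bar> + C" by (simp add: dirichlet_remainder_def)
    assume w: "\<bar>w\<bar> > M + \<bar>\<xi>\<bar> + 1"
    then have "M < \<bar>\<xi> + w\<bar>" by arith
    moreover have "w \<notin> {-1..1}" using w M0 by auto
    ultimately show "dirichlet_remainder B \<xi> w = 0" using Bs[of "\<xi> + w"] by (simp add: dirichlet_remainder_def)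
  qed (simp add: dirichlet_remainder_def[abs_def])
qed

lemma truncated_fourier_ifourier_integral:
  assumes B: "bounded_compact_support B" and h: "bounded_compact_support (dirichlet_remainder B \<xi>)"
    and L: "L > 0"
  shows "(LINT x:{-L..L}|lborel. ifourier_integral B x * cis (-(x * \<xi>))) =
    (B \<xi> * complex_of_real (4 * Si L) + 2 * (LINT w|lborel. dirichlet_remainder B \<xi> w * sin (L * w))) / (2 * pi)"
proof -
  let ?h = "dirichlet_remainder B \<xi>"
  have "integrable lborel (\<lambda>w. indicator {-1..1} w * (2 * sin (L * w) / w))"
  proof (rule integrable_bounded_compact_support[where C="2 * L" and M=1])
    show "norm (indicator {-1..1} w * (2 * sin (L * w) / w)) \<le> 2 * L" for w
      using abs_dirichlet_kernel_le[of L w] L by (simp add: indicator_def)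
    show "indicator {-1..1} w * (2 * sin (L * w) / w) = 0" if "\<bar>w\<bar> > 1" for w
    proof -
      have "w \<notin> {-1..1}" using that by auto
      then show ?thesis by simp
    qed
  qed measurable
  then have int1: "integrable lborel (\<lambda>w. B \<xi> * complex_of_real (indicator {-1..1} w * (2 * sin (L * w) / w)))"
    by (intro integrable_mult_right integrable_of_real)
  have "bounded_compact_support (\<lambda>w. complex_of_real (sin (L * w)) * ?h w)"
    by (rule bounded_compact_support_mult[OF h, where D=1])
       (simp_all add: borel_measurable_continuous_onI continuous_intros)
  then have int2: "integrable lborel (\<lambda>w. 2 * (?h w * complex_of_real (sin (L * w))))"
    by (simp add: bounded_compact_support_integrable mult.commute)
  have "B (\<xi> + w) * complex_of_real (2 * sin (L * w) / w) =
      B \<xi> * complex_of_real (indicator {-1..1} w * (2 * sin (L * w) / w)) + 2 * (?h w * complex_of_real (sin (L * w)))"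
    for w
    by (cases "w = 0") (simp_all add: dirichlet_remainder_def field_simps indicator_def)
  then have "(LINT w|lborel. B (\<xi> + w) * complex_of_real (2 * sin (L * w) / w)) =
      (LINT w|lborel. B \<xi> * complex_of_real (indicator {-1..1} w * (2 * sin (L * w) / w))
        + 2 * (?h w * complex_of_real (sin (L * w))))"
    by simp
  also have "\<dots> = (LINT w|lborel. B \<xi> * complex_of_real (indicator {-1..1} w * (2 * sin (L * w) / w)))
      + (LINT w|lborel. 2 * (?h w * complex_of_real (sin (L * w))))"
    by (rule Bochner_Integration.integral_add[OF int1 int2])
  also have "(LINT w|lborel. B \<xi> * complex_of_real (indicator {-1..1} w * (2 * sin (L * w) / w))) =
      B \<xi> * complex_of_real (LBINT w. indicator {-1..1} w * (2 * sin (L * w) / w))"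
    by (simp only: integral_mult_right_zero integral_complex_of_real)
  also have "(LBINT w. indicator {-1..1} w * (2 * sin (L * w) / w)) = 4 * Si L"
    by (rule integral_dirichlet_kernel[OF L])
  also have "(LINT w|lborel. 2 * (?h w * complex_of_real (sin (L * w)))) =
      2 * (LINT w|lborel. ?h w * complex_of_real (sin (L * w)))"
    by (simp only: integral_mult_right_zero)
  finally show ?thesis using set_integral_ifourier_integral_cis[OF B, of L \<xi>] L by simp
qed

lemma fourier_ifourier_integral:
  assumes B: "bounded_compact_support B" and lip: "\<And>\<zeta>. cmod (B \<zeta> - B \<xi>) \<le> K * \<bar>\<zeta> - \<xi>\<bar>"
  shows "fourier (ifourier_integral B) \<xi> = B \<xi>"
proof -
  have h: "bounded_compact_support (dirichlet_remainder B \<xi>)"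
    by (rule bounded_compact_support_dirichlet_remainder[OF B lip])
  have "((\<lambda>L. (B \<xi> * complex_of_real (4 * Si L) + 2 * (LINT w|lborel. dirichlet_remainder B \<xi> w * sin (L * w)))
      / (2 * pi)) \<longlongrightarrow> (B \<xi> * complex_of_real (4 * (pi / 2)) + 2 * 0) / (2 * pi)) at_top"
    by (intro tendsto_intros Si_at_top riemann_lebesgue_sin_complex[OF h]) simp
  then have "((\<lambda>L. (B \<xi> * complex_of_real (4 * Si L) + 2 * (LINT w|lborel. dirichlet_remainder B \<xi> w * sin (L * w)))
      / (2 * pi)) \<longlongrightarrow> B \<xi>) at_top"
    by simp
  then have "((\<lambda>L. LINT x:{-L..L}|lborel. ifourier_integral B x * cis (-(x * \<xi>))) \<longlongrightarrow> B \<xi>) at_top"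
    by (rule Lim_transform_eventually)
       (use eventually_gt_at_top[of 0] in \<open>eventually_elim, simp add: truncated_fourier_ifourier_integral[OF B h]\<close>)
  then show ?thesis unfolding fourier_def by (simp add: tendsto_Lim)
qed

lemma fourier_ifourier_integral_lipschitz:
  assumes "bounded_compact_support B" "K-lipschitz_on UNIV B"
  shows "fourier (ifourier_integral B) \<xi> = B \<xi>"
  using assms lipschitz_on_normD[OF assms(2)] by (intro fourier_ifourier_integral[where K=K]) auto

lemma fmult_eq_ifourier_integral:
  assumes "bounded_compact_support B" "countable E" "\<And>\<xi>. \<xi> \<notin> E \<Longrightarrow> fourier f \<xi> = B \<xi>"
    and "m \<in> borel_measurable borel" "\<And>\<xi>. cmod (m \<xi>) \<le> D"
  shows "fmult m f = ifourier_integral (\<lambda>\<xi>. m \<xi> * B \<xi>)"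
proof
  fix x
  have "(\<lambda>R. LINT \<xi>:{-R..R}|lborel. m \<xi> * fourier f \<xi> * cis (x * \<xi>)) =
      (\<lambda>R. LINT \<xi>:{-R..R}|lborel. m \<xi> * B \<xi> * cis (x * \<xi>))"
    unfolding set_lebesgue_integral_def
    by (intro ext integral_discrete_difference[where X=E]) (auto simp: assms(2,3))
  then have "fmult m f x = ifourier (\<lambda>\<xi>. m \<xi> * B \<xi>) x" unfolding fmult_def ifourier_def by simp
  also have "\<dots> = ifourier_integral (\<lambda>\<xi>. m \<xi> * B \<xi>) x"
    by (rule ifourier_eq_ifourier_integral[OF bounded_compact_support_mult[OF assms(1,4,5)]])
  finally show "fmult m f x = ifourier_integral (\<lambda>\<xi>. m \<xi> * B \<xi>) x" .
qed

lemma ifourier_integral_cmult: "c * ifourier_integral B x = ifourier_integral (\<lambda>\<zeta>. c * B \<zeta>) x"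
  unfolding ifourier_integral_def by (simp add: mult.assoc)

lemma set_integral_ifourier_integral:
  fixes a b :: real and H :: "real \<Rightarrow> real \<Rightarrow> complex"
  assumes meas: "(\<lambda>p. H (fst p) (snd p)) \<in> borel_measurable (lborel \<Otimes>\<^sub>M lborel)"
    and bnd: "\<And>\<tau> \<zeta>. cmod (H \<tau> \<zeta>) \<le> C" and supp: "\<And>\<tau> \<zeta>. \<bar>\<zeta>\<bar> > M \<Longrightarrow> H \<tau> \<zeta> = 0"
  shows "(LINT \<tau>:{a..b}|lborel. ifourier_integral (H \<tau>) x) =
    ifourier_integral (\<lambda>\<zeta>. LINT \<tau>:{a..b}|lborel. H \<tau> \<zeta>) x"
proof -
  define F where "F \<tau> \<zeta> = indicator {a..b} \<tau> *\<^sub>R (H \<tau> \<zeta> * cis (x * \<zeta>))" for \<tau> \<zeta>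
  have [measurable]: "(\<lambda>p. H (fst p) (snd p)) \<in> borel_measurable (lborel \<Otimes>\<^sub>M lborel)" by (rule meas)
  have intF: "integrable (lborel \<Otimes>\<^sub>M lborel) (\<lambda>(\<tau>, \<zeta>). F \<tau> \<zeta>)"
    unfolding F_def
    by (rule integrable_pair_indicator_bounded_compact_support[where C=C and M=M])
       (simp_all add: norm_mult bnd supp)
  have "(LINT \<tau>:{a..b}|lborel. ifourier_integral (H \<tau>) x) = (LINT \<tau>|lborel. LINT \<zeta>|lborel. F \<tau> \<zeta>) / (2 * pi)"
    unfolding set_lebesgue_integral_def ifourier_integral_def F_def by (simp add: scaleR_conv_of_real)
  also have "(LINT \<tau>|lborel. LINT \<zeta>|lborel. F \<tau> \<zeta>) = (LINT \<zeta>|lborel. LINT \<tau>|lborel. F \<tau> \<zeta>)"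
    using lborel_pair.Fubini_integral[OF intF] by simp
  also have "\<dots> = (LINT \<zeta>|lborel. (LINT \<tau>:{a..b}|lborel. H \<tau> \<zeta>) * cis (x * \<zeta>))"
    unfolding set_lebesgue_integral_def F_def
    by (simp add: scaleR_conv_of_real mult.assoc flip: integral_mult_left_zero)
  finally show ?thesis unfolding ifourier_integral_def .
qed

definition conv :: "(real \<Rightarrow> complex) \<Rightarrow> (real \<Rightarrow> complex) \<Rightarrow> real \<Rightarrow> complex" where
  "conv f g \<zeta> = (LINT a|lborel. f a * g (\<zeta> - a))"

lemma bounded_compact_support_reflect_shift:
  assumes "bounded_compact_support P"
  shows "bounded_compact_support (\<lambda>a. P (\<zeta> - a))"
proof -
  obtain C M where Pm[measurable]: "P \<in> borel_measurable borel" and Pb: "\<And>\<zeta>. cmod (P \<zeta>) \<le> C"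
    and Ps: "\<And>\<zeta>. \<bar>\<zeta>\<bar> > M \<Longrightarrow> P \<zeta> = 0" using bounded_compact_supportE[OF assms] by metis
  show ?thesis
  proof (rule bounded_compact_supportI[where C=C and M="M + \<bar>\<zeta>\<bar>"])
    show "P (\<zeta> - a) = 0" if "\<bar>a\<bar> > M + \<bar>\<zeta>\<bar>" for a using that Ps[of "\<zeta> - a"] by arith
  qed (use Pb in auto)
qed

lemma bounded_compact_support_diff:
  assumes "bounded_compact_support P" "bounded_compact_support Q"
  shows "bounded_compact_support (\<lambda>x. P x - Q x)"
proof -
  obtain C1 M1 C2 M2 where [measurable]: "P \<in> borel_measurable borel" "Q \<in> borel_measurable borel"
    and Pb: "\<And>\<zeta>. cmod (P \<zeta>) \<le> C1" and Ps: "\<And>\<zeta>. \<bar>\<zeta>\<bar> > M1 \<Longrightarrow> P \<zeta> = 0"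
    and Qb: "\<And>\<zeta>. cmod (Q \<zeta>) \<le> C2" and Qs: "\<And>\<zeta>. \<bar>\<zeta>\<bar> > M2 \<Longrightarrow> Q \<zeta> = 0" and "0 \<le> M1" "0 \<le> M2"
    using bounded_compact_supportE[OF assms(1)] bounded_compact_supportE[OF assms(2)] by metis
  show ?thesis
  proof (rule bounded_compact_supportI[where C="C1 + C2" and M="M1 + M2"])
    show "cmod (P \<zeta> - Q \<zeta>) \<le> C1 + C2" for \<zeta>
      using norm_triangle_ineq4[of "P \<zeta>" "Q \<zeta>"] Pb[of \<zeta>] Qb[of \<zeta>] by linarith
    show "P \<zeta> - Q \<zeta> = 0" if "\<bar>\<zeta>\<bar> > M1 + M2" for \<zeta>
      using that Ps[of \<zeta>] Qs[of \<zeta>] \<open>0 \<le> M1\<close> \<open>0 \<le> M2\<close> by auto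
  qed simp
qed

lemma bounded_compact_support_conv_integrand:
  assumes "bounded_compact_support A1" "bounded_compact_support A2"
  shows "bounded_compact_support (\<lambda>a. A1 a * A2 (\<zeta> - a))"
proof -
  obtain C1 where A1m: "A1 \<in> borel_measurable borel" and A1b: "\<And>\<zeta>. cmod (A1 \<zeta>) \<le> C1"
    using bounded_compact_supportE[OF assms(1)] by metis
  show ?thesis by (rule bounded_compact_support_mult[OF bounded_compact_support_reflect_shift[OF assms(2)] A1m A1b])
qed

lemma conv_eq_0:
  assumes "\<And>\<zeta>. \<bar>\<zeta>\<bar> > M1 \<Longrightarrow> A1 \<zeta> = 0" "\<And>\<zeta>. \<bar>\<zeta>\<bar> > M2 \<Longrightarrow> A2 \<zeta> = 0" "\<bar>\<zeta>\<bar> > M1 + M2"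
  shows "conv A1 A2 \<zeta> = 0"
proof -
  have "A1 a * A2 (\<zeta> - a) = 0" for a
  proof (cases "\<bar>a\<bar> > M1")
    case False then have "\<bar>\<zeta> - a\<bar> > M2" using assms(3) by arith
    then show ?thesis using assms(2) by simp
  qed (use assms(1) in simp)
  then have "(\<lambda>a. A1 a * A2 (\<zeta> - a)) = (\<lambda>a. 0)" by (rule ext)
  then show ?thesis unfolding conv_def by simp
qed

lemma norm_conv_le:
  assumes "bounded_compact_support A1" "bounded_compact_support A2"
    and "\<And>\<zeta>. cmod (A1 \<zeta>) \<le> C1" "\<And>\<zeta>. cmod (A2 \<zeta>) \<le> C2" "\<And>\<zeta>. \<bar>\<zeta>\<bar> > M1 \<Longrightarrow> A1 \<zeta> = 0" "0 \<le> M1"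
  shows "cmod (conv A1 A2 \<zeta>) \<le> C1 * C2 * (2 * M1)"
proof -
  have C10: "0 \<le> C1" using assms(3)[of 0] norm_ge_zero order_trans by blast
  have C20: "0 \<le> C2" using assms(4)[of 0] norm_ge_zero order_trans by blast
  have "cmod (conv A1 A2 \<zeta>) \<le> (LBINT a. cmod (A1 a * A2 (\<zeta> - a)))"
    unfolding conv_def by (rule integral_norm_bound)
  also have "\<dots> \<le> (LBINT a. C1 * C2 * indicator {-M1..M1} a)"
  proof (rule integral_mono)
    show "integrable lborel (\<lambda>a. cmod (A1 a * A2 (\<zeta> - a)))"
      using bounded_compact_support_integrable[OF bounded_compact_support_conv_integrand[OF assms(1,2)]]
      by (rule integrable_norm)
    show "integrable lborel (\<lambda>a. C1 * C2 * indicator {-M1..M1} a)"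
      by (intro integrable_mult_right integrable_real_indicator) (simp_all add: emeasure_lborel_Icc_eq)
    show "cmod (A1 a * A2 (\<zeta> - a)) \<le> C1 * C2 * indicator {-M1..M1} a" for a
    proof (cases "\<bar>a\<bar> > M1")
      case False then show ?thesis
        unfolding norm_mult by (auto simp: indicator_def intro!: mult_mono assms(3,4) C10 C20)
    qed (use assms(5) C10 C20 in auto)
  qed
  also have "\<dots> = C1 * C2 * (2 * M1)" using assms(6) by (simp add: emeasure_lborel_Icc_eq)
  finally show ?thesis .
qed

lemma integrable_conv_integrand_cis:
  assumes "bounded_compact_support A1" "bounded_compact_support A2"
  shows "integrable (lborel \<Otimes>\<^sub>M lborel) (\<lambda>(a, \<zeta>). A1 a * A2 (\<zeta> - a) * cis (y * \<zeta>))"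
proof -
  obtain C1 M1 where [measurable]: "A1 \<in> borel_measurable borel" and A1b: "\<And>\<zeta>. cmod (A1 \<zeta>) \<le> C1"
    and A1s: "\<And>\<zeta>. \<bar>\<zeta>\<bar> > M1 \<Longrightarrow> A1 \<zeta> = 0" and C10: "0 \<le> C1"
    using bounded_compact_supportE[OF assms(1)] by metis
  obtain C2 M2 where [measurable]: "A2 \<in> borel_measurable borel" and A2b: "\<And>\<zeta>. cmod (A2 \<zeta>) \<le> C2"
    and A2s: "\<And>\<zeta>. \<bar>\<zeta>\<bar> > M2 \<Longrightarrow> A2 \<zeta> = 0" and C20: "0 \<le> C2"
    using bounded_compact_supportE[OF assms(2)] by metis
  show ?thesis
  proof (rule integrable_pair_bounded_box[where C="C1 * C2" and a="-M1" and b=M1 and c="-(M1+M2)" and d="M1+M2"])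
    show "(\<lambda>(a, \<zeta>). A1 a * A2 (\<zeta> - a) * cis (y * \<zeta>)) \<in> borel_measurable (lborel \<Otimes>\<^sub>M lborel)" by measurable
    show "norm ((\<lambda>(a, \<zeta>). A1 a * A2 (\<zeta> - a) * cis (y * \<zeta>)) p) \<le> C1 * C2" for p
      by (cases p) (simp add: norm_mult mult_mono A1b A2b C10 C20)
    show "(\<lambda>(a, \<zeta>). A1 a * A2 (\<zeta> - a) * cis (y * \<zeta>)) p = 0" if p: "p \<notin> {-M1..M1} \<times> {-(M1+M2)..M1+M2}" for p
    proof (cases p)
      case (Pair a \<zeta>)
      then have "\<bar>a\<bar> > M1 \<or> \<bar>\<zeta> - a\<bar> > M2" using p by auto
      then show ?thesis using Pair A1s A2s by auto
    qed
  qed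
qed

lemma ifourier_integral_mult:
  assumes "bounded_compact_support A1" "bounded_compact_support A2"
  shows "ifourier_integral A1 y * ifourier_integral A2 y = ifourier_integral (\<lambda>\<zeta>. conv A1 A2 \<zeta> / (2 * pi)) y"
proof -
  define F where "F a \<zeta> = A1 a * A2 (\<zeta> - a) * cis (y * \<zeta>)" for a \<zeta>
  have intF: "integrable (lborel \<Otimes>\<^sub>M lborel) (\<lambda>(a, \<zeta>). F a \<zeta>)"
    unfolding F_def by (rule integrable_conv_integrand_cis[OF assms])
  have "(LINT a|lborel. A1 a * cis (y * a)) * (LINT b|lborel. A2 b * cis (y * b)) =
      (LINT a|lborel. A1 a * cis (y * a) * (LINT b|lborel. A2 b * cis (y * b)))"
    by simp
  also have "\<dots> = (LINT a|lborel. LINT \<zeta>|lborel. F a \<zeta>)"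
  proof -
    have "A1 a * cis (y * a) * (LINT b|lborel. A2 b * cis (y * b)) = (LINT \<zeta>|lborel. F a \<zeta>)" for a
    proof -
      have "(LINT b|lborel. A2 b * cis (y * b)) = (LINT \<zeta>|lborel. A2 (-a + \<zeta>) * cis (y * (-a + \<zeta>)))"
        using lborel_integral_real_affine[of 1 "\<lambda>b. A2 b * cis (y * b)" "-a"] by simp
      moreover have "cis (y * a) * cis (y * (-a + \<zeta>)) = cis (y * \<zeta>)" for \<zeta>
        by (simp add: cis_mult algebra_simps)
      ultimately show ?thesis unfolding F_def by (simp add: algebra_simps flip: integral_mult_right_zero)
    qed
    then show ?thesis by simp
  qed
  also have "\<dots> = (LINT \<zeta>|lborel. LINT a|lborel. F a \<zeta>)"
    using lborel_pair.Fubini_integral[OF intF] by simp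
  also have "\<dots> = (LINT \<zeta>|lborel. conv A1 A2 \<zeta> * cis (y * \<zeta>))"
    unfolding F_def conv_def by simp
  finally show ?thesis unfolding ifourier_integral_def by simp
qed

lemma lipschitz_conv:
  assumes "bounded_compact_support A1" "bounded_compact_support A2" "\<And>\<zeta>. cmod (A1 \<zeta>) \<le> C1"
    and L1_shift: "\<And>\<zeta> \<zeta>'. (LBINT a. cmod (A2 (\<zeta> - a) - A2 (\<zeta>' - a))) \<le> K * \<bar>\<zeta> - \<zeta>'\<bar>"
  shows "(C1 * K)-lipschitz_on UNIV (conv A1 A2)"
proof (rule lipschitz_onI)
  have C10: "0 \<le> C1" using assms(3)[of 0] norm_ge_zero order_trans by blast
  have "0 \<le> K * \<bar>1 - 0\<bar>"
    by (rule order_trans[OF _ L1_shift]) (rule integral_nonneg_AE, simp)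
  then have "0 \<le> K" by simp
  then show "0 \<le> C1 * K" using C10 by simp
  fix \<zeta> \<zeta>' :: real
  have nd: "bounded_compact_support (\<lambda>a. A2 (\<zeta> - a) - A2 (\<zeta>' - a))"
    by (intro bounded_compact_support_diff bounded_compact_support_reflect_shift assms(2))
  have "conv A1 A2 \<zeta> - conv A1 A2 \<zeta>' = (LINT a|lborel. A1 a * (A2 (\<zeta> - a) - A2 (\<zeta>' - a)))"
    unfolding conv_def
    using bounded_compact_support_integrable[OF bounded_compact_support_conv_integrand[OF assms(1,2)]]
    by (simp add: right_diff_distrib)
  also have "cmod \<dots> \<le> (LBINT a. cmod (A1 a * (A2 (\<zeta> - a) - A2 (\<zeta>' - a))))"
    by (rule integral_norm_bound)
  also have "\<dots> \<le> (LBINT a. C1 * cmod (A2 (\<zeta> - a) - A2 (\<zeta>' - a)))"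
  proof (rule integral_mono)
    obtain D where A1m: "A1 \<in> borel_measurable borel" and A1b: "\<And>\<zeta>. cmod (A1 \<zeta>) \<le> D"
      using bounded_compact_supportE[OF assms(1)] by metis
    show "integrable lborel (\<lambda>a. cmod (A1 a * (A2 (\<zeta> - a) - A2 (\<zeta>' - a))))"
      using bounded_compact_support_integrable[OF bounded_compact_support_mult[OF nd A1m A1b]]
      by (rule integrable_norm)
    show "integrable lborel (\<lambda>a. C1 * cmod (A2 (\<zeta> - a) - A2 (\<zeta>' - a)))"
      using bounded_compact_support_integrable[OF nd] by simp
    show "cmod (A1 a * (A2 (\<zeta> - a) - A2 (\<zeta>' - a))) \<le> C1 * cmod (A2 (\<zeta> - a) - A2 (\<zeta>' - a))" for a
      unfolding norm_mult by (rule mult_right_mono) (use assms(3) in auto)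
  qed
  also have "\<dots> = C1 * (LBINT a. cmod (A2 (\<zeta> - a) - A2 (\<zeta>' - a)))" by simp
  also have "\<dots> \<le> C1 * (K * \<bar>\<zeta> - \<zeta>'\<bar>)" by (rule mult_left_mono[OF L1_shift C10])
  finally show "dist (conv A1 A2 \<zeta>) (conv A1 A2 \<zeta>') \<le> C1 * K * dist \<zeta> \<zeta>'"
    by (simp add: dist_norm dist_real_def)
qed

lemma lipschitz_on_mult_bounded:
  fixes f g :: "'a::metric_space \<Rightarrow> 'b::real_normed_algebra"
  assumes "Kf-lipschitz_on S f" "Kg-lipschitz_on S g"
    and "\<And>x. x \<in> S \<Longrightarrow> norm (f x) \<le> a" "\<And>x. x \<in> S \<Longrightarrow> norm (g x) \<le> b" "0 \<le> a" "0 \<le> b"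
  shows "(a * Kg + b * Kf)-lipschitz_on S (\<lambda>x. f x * g x)"
proof (rule lipschitz_onI)
  have Kf: "0 \<le> Kf" using assms(1) by (rule lipschitz_on_nonneg)
  have Kg: "0 \<le> Kg" using assms(2) by (rule lipschitz_on_nonneg)
  show "0 \<le> a * Kg + b * Kf" using Kf Kg assms(5,6) by simp
  fix x y assume xy: "x \<in> S" "y \<in> S"
  have "f x * g x - f y * g y = f x * (g x - g y) + (f x - f y) * g y" by (simp add: algebra_simps)
  then have "norm (f x * g x - f y * g y) \<le> norm (f x) * norm (g x - g y) + norm (f x - f y) * norm (g y)"
    by (metis norm_mult_ineq norm_triangle_le add_mono)
  also have "\<dots> \<le> a * (Kg * dist x y) + (Kf * dist x y) * b"
  proof (rule add_mono)
    show "norm (f x) * norm (g x - g y) \<le> a * (Kg * dist x y)"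
      using lipschitz_onD[OF assms(2) xy] assms(3)[OF xy(1)] assms(5)
      by (intro mult_mono) (simp_all add: dist_norm)
    show "norm (f x - f y) * norm (g y) \<le> (Kf * dist x y) * b"
      using lipschitz_onD[OF assms(1) xy] assms(4)[OF xy(2)] Kf
      by (intro mult_mono) (simp_all add: dist_norm)
  qed
  finally show "dist (f x * g x) (f y * g y) \<le> (a * Kg + b * Kf) * dist x y"
    by (simp add: dist_norm algebra_simps)
qed

lemma lipschitz_on_mult_left:
  fixes f :: "'a::metric_space \<Rightarrow> 'b::real_normed_div_algebra"
  assumes "K-lipschitz_on S f"
  shows "(norm c * K)-lipschitz_on S (\<lambda>x. c * f x)"
proof (rule lipschitz_onI)
  show "0 \<le> norm c * K" using lipschitz_on_nonneg[OF assms] by simp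
  fix x y assume "x \<in> S" "y \<in> S"
  then have "norm c * dist (f x) (f y) \<le> norm c * (K * dist x y)"
    by (intro mult_left_mono lipschitz_onD[OF assms]) auto
  then show "dist (c * f x) (c * f y) \<le> norm c * K * dist x y"
    by (simp add: dist_norm norm_mult mult.assoc flip: right_diff_distrib)
qed

lemma lipschitz_set_integral:
  fixes H :: "real \<Rightarrow> real \<Rightarrow> complex"
  assumes "\<And>\<zeta>. (\<lambda>\<tau>. H \<tau> \<zeta>) \<in> borel_measurable borel" "\<And>\<tau>. \<tau> \<in> {a..b} \<Longrightarrow> K-lipschitz_on UNIV (H \<tau>)"
    and "\<And>\<tau> \<zeta>. cmod (H \<tau> \<zeta>) \<le> C" "a \<le> b"
  shows "(K * (b - a))-lipschitz_on UNIV (\<lambda>\<zeta>. LINT \<tau>:{a..b}|lborel. H \<tau> \<zeta>)"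
proof (rule lipschitz_onI)
  have "0 \<le> K" using assms(2)[of a] assms(4) lipschitz_on_nonneg by auto
  then show "0 \<le> K * (b - a)" using assms(4) by simp
  fix \<zeta> \<zeta>' :: real
  have int: "set_integrable lborel {a..b} (\<lambda>\<tau>. H \<tau> z)" for z
    unfolding set_integrable_def using assms(1,3)
    by (intro integrableI_bounded_set_indicator[where B=C]) (simp_all add: emeasure_lborel_Icc_eq)
  have "(LINT \<tau>:{a..b}|lborel. H \<tau> \<zeta>) - (LINT \<tau>:{a..b}|lborel. H \<tau> \<zeta>') =
      (LINT \<tau>:{a..b}|lborel. H \<tau> \<zeta> - H \<tau> \<zeta>')"
    by (rule set_integral_diff(2)[OF int int, symmetric])
  also have "norm \<dots> \<le> (K * dist \<zeta> \<zeta>') * (b - a)"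
    using assms(1,4) lipschitz_onD[OF assms(2)] by (intro set_integral_norm_le) (auto simp: dist_norm)
  finally show "dist (LINT \<tau>:{a..b}|lborel. H \<tau> \<zeta>) (LINT \<tau>:{a..b}|lborel. H \<tau> \<zeta>') \<le> K * (b - a) * dist \<zeta> \<zeta>'"
    by (simp add: dist_norm algebra_simps)
qed

section \<open>Spectral densities of the Picard iterates of \<open>phi0 N R\<close>\<close>

lemma borel_measurable_dispersion[measurable]: "dispersion \<in> borel_measurable borel"
  unfolding dispersion_def by measurable

lemma abs_dispersion_le: "\<bar>dispersion u\<bar> \<le> 1/2"
proof -
  have "0 \<le> (\<bar>u\<bar> - 1)\<^sup>2" by simp
  then have "2 * \<bar>u\<bar> \<le> 1 + u\<^sup>2" by (simp add: power2_eq_square algebra_simps abs_mult_self_eq)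
  then show ?thesis by (simp add: dispersion_def abs_divide divide_le_eq add_pos_nonneg)
qed

lemma norm_of_real_dispersion_le: "cmod (complex_of_real (dispersion \<zeta>)) \<le> 1/2"
  using abs_dispersion_le[of \<zeta>] by simp

lemma dispersion_nonneg: "0 \<le> \<zeta> \<Longrightarrow> 0 \<le> dispersion \<zeta>"
  by (simp add: dispersion_def)

lemma dispersion_ge: "1/2 \<le> \<zeta> \<Longrightarrow> \<zeta> \<le> 1 \<Longrightarrow> 2/5 \<le> dispersion \<zeta>"
proof -
  assume "1/2 \<le> \<zeta>" "\<zeta> \<le> 1"
  then have "(2 * \<zeta> - 1) * (\<zeta> - 2) \<le> 0" by (intro mult_nonneg_nonpos) auto
  then have "2 * (1 + \<zeta>\<^sup>2) \<le> 5 * \<zeta>" by (simp add: algebra_simps power2_eq_square)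
  then show ?thesis by (simp add: dispersion_def le_divide_eq add_pos_nonneg)
qed

lemma lipschitz_dispersion: "1-lipschitz_on S dispersion"
proof (rule lipschitz_onI)
  fix u v :: real
  have pu: "1 + u\<^sup>2 > 0" and pv: "1 + v\<^sup>2 > 0" by (auto intro: add_pos_nonneg)
  have eq: "dispersion u - dispersion v = (u - v) * ((1 - u * v) / ((1 + u\<^sup>2) * (1 + v\<^sup>2)))"
    using pu pv by (simp add: dispersion_def field_simps power2_eq_square)
  have "\<bar>1 - u * v\<bar> \<le> (1 + u\<^sup>2) * (1 + v\<^sup>2)"
  proof -
    have "0 \<le> (\<bar>u\<bar> - \<bar>v\<bar>)\<^sup>2" by simp
    then have "2 * \<bar>u * v\<bar> \<le> u\<^sup>2 + v\<^sup>2" by (simp add: power2_eq_square algebra_simps abs_mult_self_eq abs_mult)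
    moreover have "0 \<le> u\<^sup>2 * v\<^sup>2" by simp
    moreover have "\<bar>1 - u * v\<bar> \<le> 1 + \<bar>u * v\<bar>" by linarith
    moreover have "0 \<le> \<bar>u * v\<bar>" by simp
    ultimately have "\<bar>1 - u * v\<bar> \<le> 1 + u\<^sup>2 + v\<^sup>2 + u\<^sup>2 * v\<^sup>2" by linarith
    then show ?thesis by (simp add: algebra_simps)
  qed
  then have "\<bar>(1 - u * v) / ((1 + u\<^sup>2) * (1 + v\<^sup>2))\<bar> \<le> 1"
    using pu pv by (simp add: abs_divide abs_mult divide_le_eq)
  then have "\<bar>u - v\<bar> * \<bar>(1 - u * v) / ((1 + u\<^sup>2) * (1 + v\<^sup>2))\<bar> \<le> \<bar>u - v\<bar> * 1"
    by (intro mult_left_mono) auto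
  then show "dist (dispersion u) (dispersion v) \<le> 1 * dist u v"
    unfolding dist_real_def eq abs_mult by simp
qed simp

lemma dist_cis_le: "dist (cis a) (cis b) \<le> dist a b"
proof -
  have "cmod (cis (a - b) - 1) \<le> \<bar>a - b\<bar>"
    using iexp_approx1[of "a - b" 0] by (simp add: cis_conv_exp)
  moreover have "cis a - cis b = cis b * (cis (a - b) - 1)"
    by (simp add: right_diff_distrib cis_mult)
  ultimately show ?thesis by (simp add: dist_norm dist_real_def norm_mult)
qed

lemma lipschitz_cis_dispersion: "\<bar>s\<bar>-lipschitz_on S (\<lambda>\<zeta>. cis (s * dispersion \<zeta>))"
proof -
  have "(\<bar>s\<bar> * 1)-lipschitz_on S (\<lambda>\<zeta>. s * dispersion \<zeta>)"
    by (rule lipschitz_on_cmult_real[OF lipschitz_dispersion])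
  moreover have "1-lipschitz_on T cis" for T by (rule lipschitz_onI) (simp_all add: dist_cis_le)
  ultimately show ?thesis using lipschitz_on_compose2 by fastforce
qed

definition phi0_ft :: "real \<Rightarrow> real \<Rightarrow> real \<Rightarrow> complex" where
  "phi0_ft N R \<xi> = complex_of_real (R * indicator (I_N N) \<xi>)"

lemma I_N_sets[measurable]: "I_N N \<in> sets borel"
  unfolding I_N_def by simp

lemma notin_I_N: "\<bar>\<xi>\<bar> > \<bar>N\<bar> + 1 \<Longrightarrow> \<xi> \<notin> I_N N"
  by (auto simp: I_N_def)

lemma borel_measurable_phi0_ft[measurable]: "phi0_ft N R \<in> borel_measurable borel"
  unfolding phi0_ft_def by measurable

lemma bounded_compact_support_phi0_ft: "bounded_compact_support (phi0_ft N R)"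
  by (rule bounded_compact_supportI[where C="\<bar>R\<bar>" and M="\<bar>N\<bar> + 1"])
     (auto simp: phi0_ft_def indicator_def dest: notin_I_N)

lemma phi0_eq_ifourier_integral: "phi0 N R = ifourier_integral (phi0_ft N R)"
  using ifourier_eq_ifourier_integral[OF bounded_compact_support_phi0_ft]
  unfolding phi0_def phi0_ft_def[abs_def] by (intro ext) simp

lemma phi0_ft_lipschitz_at:
  assumes "\<xi> \<notin> {-N-1, -N+1, N-1, N+1}"
  obtains K where "\<And>\<zeta>. cmod (phi0_ft N R \<zeta> - phi0_ft N R \<xi>) \<le> K * \<bar>\<zeta> - \<xi>\<bar>"
proof -
  define d where "d = Min {\<bar>\<xi> - (-N-1)\<bar>, \<bar>\<xi> - (-N+1)\<bar>, \<bar>\<xi> - (N-1)\<bar>, \<bar>\<xi> - (N+1)\<bar>}"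
  have d: "d > 0" using assms by (auto simp: d_def)
  have "cmod (phi0_ft N R \<zeta> - phi0_ft N R \<xi>) \<le> \<bar>R\<bar> / d * \<bar>\<zeta> - \<xi>\<bar>" for \<zeta>
  proof (cases "\<bar>\<zeta> - \<xi>\<bar> < d")
    case True
    then have "\<bar>\<zeta> - \<xi>\<bar> < \<bar>\<xi> - e\<bar>" if "e \<in> {-N-1, -N+1, N-1, N+1}" for e
      using that by (auto simp: d_def)
    \<comment> \<open>no endpoint of \<open>I_N N\<close> lies between \<open>\<zeta>\<close> and \<open>\<xi>\<close>\<close>
    then have "(\<zeta> \<in> I_N N) = (\<xi> \<in> I_N N)" unfolding I_N_def by (simp, smt (verit))
    then show ?thesis using d by (simp add: phi0_ft_def indicator_def)
  next
    case False
    have "cmod (phi0_ft N R \<zeta> - phi0_ft N R \<xi>) \<le> \<bar>R\<bar>" by (simp add: phi0_ft_def indicator_def)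
    also have "\<bar>R\<bar> \<le> \<bar>R\<bar> / d * \<bar>\<zeta> - \<xi>\<bar>"
      using False d mult_left_mono[of d "\<bar>\<zeta> - \<xi>\<bar>" "\<bar>R\<bar>"] by (simp add: field_simps)
    finally show ?thesis .
  qed
  then show ?thesis by (rule that)
qed

lemma fourier_phi0:
  "\<xi> \<notin> {-N-1, -N+1, N-1, N+1} \<Longrightarrow> fourier (phi0 N R) \<xi> = phi0_ft N R \<xi>"
  unfolding phi0_eq_ifourier_integral
  by (metis phi0_ft_lipschitz_at fourier_ifourier_integral bounded_compact_support_phi0_ft)

definition U_phi0_ft :: "real \<Rightarrow> real \<Rightarrow> real \<Rightarrow> real \<Rightarrow> complex" where
  "U_phi0_ft N R \<tau> \<xi> = cis (\<tau> * dispersion \<xi>) * phi0_ft N R \<xi>"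

lemma borel_measurable_U_phi0_ft[measurable (raw)]:
  assumes [measurable]: "f \<in> borel_measurable M" "g \<in> borel_measurable M"
  shows "(\<lambda>w. U_phi0_ft N R (f w) (g w)) \<in> borel_measurable M"
proof -
  have [measurable]: "(\<lambda>w. dispersion (g w)) \<in> borel_measurable M" "(\<lambda>w. phi0_ft N R (g w)) \<in> borel_measurable M"
    by (rule measurable_compose[OF assms(2)], measurable)+
  show ?thesis unfolding U_phi0_ft_def by measurable
qed

lemma norm_U_phi0_ft_le: "cmod (U_phi0_ft N R \<tau> \<xi>) \<le> \<bar>R\<bar>"
  by (simp add: U_phi0_ft_def phi0_ft_def norm_mult indicator_def)

lemma U_phi0_ft_eq_0: "\<bar>\<xi>\<bar> > \<bar>N\<bar> + 1 \<Longrightarrow> U_phi0_ft N R \<tau> \<xi> = 0"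
  by (simp add: U_phi0_ft_def phi0_ft_def notin_I_N)

lemma bounded_compact_support_U_phi0_ft: "bounded_compact_support (U_phi0_ft N R \<tau>)"
  by (rule bounded_compact_supportI[OF _ norm_U_phi0_ft_le U_phi0_ft_eq_0]) measurable

lemma U_phi0_eq: "U \<tau> (phi0 N R) = ifourier_integral (U_phi0_ft N R \<tau>)"
  unfolding U_def U_phi0_ft_def[abs_def]
  by (rule fmult_eq_ifourier_integral[where E="{-N-1, -N+1, N-1, N+1}" and D=1,
        OF bounded_compact_support_phi0_ft]) (auto simp: fourier_phi0)

lemma abs_indicator_I_N_shift_diff_le:
  fixes \<zeta> \<zeta>' a :: real
  defines "s \<equiv> \<bar>\<zeta> - \<zeta>'\<bar>"
  shows "\<bar>indicator (I_N N) (\<zeta> - a) - indicator (I_N N) (\<zeta>' - a)\<bar> \<le>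
    (indicator {\<zeta>-(N+1)-s..\<zeta>-(N+1)+s} a + indicator {\<zeta>-(N-1)-s..\<zeta>-(N-1)+s} a
     + indicator {\<zeta>-(-N+1)-s..\<zeta>-(-N+1)+s} a + indicator {\<zeta>-(-N-1)-s..\<zeta>-(-N-1)+s} a :: real)"
proof -
  have Icc: "\<bar>indicator {p..q} (\<zeta> - a) - indicator {p..q} (\<zeta>' - a)\<bar> \<le>
      (indicator {\<zeta>-q-s..\<zeta>-q+s} a + indicator {\<zeta>-p-s..\<zeta>-p+s} a :: real)" for p q
    unfolding s_def by (cases "\<zeta> \<le> \<zeta>'") (auto simp: indicator_def)
  have "\<bar>indicator (X \<union> Y) u - indicator (X \<union> Y) v\<bar> \<le>
      \<bar>indicator X u - indicator X v\<bar> + (\<bar>indicator Y u - indicator Y v\<bar> :: real)" for X Y u v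
    by (auto simp: indicator_def)
  from this[of "{-N-1..-N+1}" "{N-1..N+1}" "\<zeta> - a" "\<zeta>' - a"] Icc[of "-N-1" "-N+1"] Icc[of "N-1" "N+1"]
  show ?thesis unfolding I_N_def by (simp add: algebra_simps)
qed

lemma norm_U_phi0_ft_diff_le:
  "cmod (U_phi0_ft N R \<tau> u - U_phi0_ft N R \<tau> v) \<le>
    \<bar>R\<bar> * \<bar>indicator (I_N N) u - indicator (I_N N) v\<bar> + \<bar>R\<bar> * \<bar>\<tau>\<bar> * \<bar>u - v\<bar> * indicator (I_N N) v"
proof -
  let ?c = "\<lambda>x. cis (\<tau> * dispersion x)"
  let ?i = "\<lambda>x. indicator (I_N N) x :: real"
  have "U_phi0_ft N R \<tau> u - U_phi0_ft N R \<tau> v =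
      ?c u * complex_of_real (R * (?i u - ?i v)) + (?c u - ?c v) * complex_of_real (R * ?i v)"
    by (simp add: U_phi0_ft_def phi0_ft_def algebra_simps)
  also have "cmod \<dots> \<le> cmod (?c u * complex_of_real (R * (?i u - ?i v))) + cmod ((?c u - ?c v) * complex_of_real (R * ?i v))"
    by (rule norm_triangle_ineq)
  also have "cmod (?c u * complex_of_real (R * (?i u - ?i v))) = \<bar>R\<bar> * \<bar>?i u - ?i v\<bar>"
    by (simp only: norm_mult norm_of_real abs_mult) simp
  also have "cmod ((?c u - ?c v) * complex_of_real (R * ?i v)) \<le> \<bar>R\<bar> * \<bar>\<tau>\<bar> * \<bar>u - v\<bar> * ?i v"
  proof -
    have "cmod (?c u - ?c v) \<le> \<bar>\<tau>\<bar> * \<bar>u - v\<bar>"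
      using lipschitz_on_normD[OF lipschitz_cis_dispersion[of \<tau> UNIV]] by simp
    then have "cmod (?c u - ?c v) * (\<bar>R\<bar> * ?i v) \<le> \<bar>\<tau>\<bar> * \<bar>u - v\<bar> * (\<bar>R\<bar> * ?i v)"
      by (rule mult_right_mono) simp
    then show ?thesis by (simp add: norm_mult abs_mult ac_simps)
  qed
  finally show ?thesis by simp
qed

lemma integral_norm_U_phi0_ft_shift_diff_le:
  "(LBINT a. cmod (U_phi0_ft N R \<tau> (\<zeta> - a) - U_phi0_ft N R \<tau> (\<zeta>' - a))) \<le> \<bar>R\<bar> * (8 + 4 * \<bar>\<tau>\<bar>) * \<bar>\<zeta> - \<zeta>'\<bar>"
proof -
  define s where "s = \<bar>\<zeta> - \<zeta>'\<bar>"
  have s0: "0 \<le> s" by (simp add: s_def)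
  define g where "g a = \<bar>R\<bar> * (indicator {\<zeta>-(N+1)-s..\<zeta>-(N+1)+s} a + indicator {\<zeta>-(N-1)-s..\<zeta>-(N-1)+s} a
     + indicator {\<zeta>-(-N+1)-s..\<zeta>-(-N+1)+s} a + indicator {\<zeta>-(-N-1)-s..\<zeta>-(-N-1)+s} a)
     + \<bar>R\<bar> * \<bar>\<tau>\<bar> * s * (indicator {\<zeta>'+N-1..\<zeta>'+N+1} a + indicator {\<zeta>'-N-1..\<zeta>'-N+1} a)" for a
  have "(LBINT a. cmod (U_phi0_ft N R \<tau> (\<zeta> - a) - U_phi0_ft N R \<tau> (\<zeta>' - a))) \<le> (LBINT a. g a)"
  proof (rule integral_mono)
    show "integrable lborel (\<lambda>a. cmod (U_phi0_ft N R \<tau> (\<zeta> - a) - U_phi0_ft N R \<tau> (\<zeta>' - a)))"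
      by (intro integrable_norm bounded_compact_support_integrable bounded_compact_support_diff
          bounded_compact_support_reflect_shift bounded_compact_support_U_phi0_ft)
    show "integrable lborel g" unfolding g_def
      by (intro Bochner_Integration.integrable_add integrable_mult_right integrable_real_indicator)
         (simp_all add: emeasure_lborel_Icc_eq)
    fix a
    have i2: "indicator (I_N N) (\<zeta>' - a) \<le> (indicator {\<zeta>'+N-1..\<zeta>'+N+1} a + indicator {\<zeta>'-N-1..\<zeta>'-N+1} a :: real)"
      by (auto simp: I_N_def indicator_def)
    have "cmod (U_phi0_ft N R \<tau> (\<zeta> - a) - U_phi0_ft N R \<tau> (\<zeta>' - a)) \<le>
        \<bar>R\<bar> * \<bar>indicator (I_N N) (\<zeta> - a) - indicator (I_N N) (\<zeta>' - a)\<bar> + \<bar>R\<bar> * \<bar>\<tau>\<bar> * s * indicator (I_N N) (\<zeta>' - a)"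
      using norm_U_phi0_ft_diff_le[of N R \<tau> "\<zeta> - a" "\<zeta>' - a"] by (simp add: s_def)
    also have "\<dots> \<le> g a"
      unfolding g_def s_def
      by (intro add_mono mult_left_mono abs_indicator_I_N_shift_diff_le i2[unfolded s_def]) (simp_all add: s_def)
    finally show "cmod (U_phi0_ft N R \<tau> (\<zeta> - a) - U_phi0_ft N R \<tau> (\<zeta>' - a)) \<le> g a" .
  qed
  also have "(LBINT a. g a) = \<bar>R\<bar> * (8 * s) + \<bar>R\<bar> * \<bar>\<tau>\<bar> * s * 4"
    unfolding g_def using s0 by (simp add: integrable_real_indicator emeasure_lborel_Icc_eq algebra_simps)
  also have "\<dots> = \<bar>R\<bar> * (8 + 4 * \<bar>\<tau>\<bar>) * \<bar>\<zeta> - \<zeta>'\<bar>" by (simp add: s_def algebra_simps)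
  finally show ?thesis .
qed

definition U_phi0_sq_ft :: "real \<Rightarrow> real \<Rightarrow> real \<Rightarrow> real \<Rightarrow> complex" where
  "U_phi0_sq_ft N R \<tau> \<zeta> = conv (U_phi0_ft N R \<tau>) (U_phi0_ft N R \<tau>) \<zeta> / (2 * pi)"

lemma borel_measurable_U_phi0_sq_ft[measurable (raw)]:
  assumes [measurable]: "f \<in> borel_measurable M" "g \<in> borel_measurable M"
  shows "(\<lambda>w. U_phi0_sq_ft N R (f w) (g w)) \<in> borel_measurable M"
  unfolding U_phi0_sq_ft_def conv_def by measurable

lemma norm_U_phi0_sq_ft_le: "cmod (U_phi0_sq_ft N R \<tau> \<zeta>) \<le> R\<^sup>2 * (\<bar>N\<bar> + 1) / pi"
proof -
  have "cmod (conv (U_phi0_ft N R \<tau>) (U_phi0_ft N R \<tau>) \<zeta>) \<le> \<bar>R\<bar> * \<bar>R\<bar> * (2 * (\<bar>N\<bar> + 1))"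
    by (rule norm_conv_le) (auto intro: bounded_compact_support_U_phi0_ft norm_U_phi0_ft_le U_phi0_ft_eq_0)
  then have "cmod (U_phi0_sq_ft N R \<tau> \<zeta>) \<le> \<bar>R\<bar> * \<bar>R\<bar> * (2 * (\<bar>N\<bar> + 1)) / (2 * pi)"
    unfolding U_phi0_sq_ft_def by (simp add: norm_divide divide_right_mono)
  also have "\<dots> = R\<^sup>2 * (\<bar>N\<bar> + 1) / pi" by (simp add: power2_eq_square abs_mult_self_eq field_simps)
  finally show ?thesis .
qed

lemma U_phi0_sq_ft_eq_0: "\<bar>\<zeta>\<bar> > 2 * (\<bar>N\<bar> + 1) \<Longrightarrow> U_phi0_sq_ft N R \<tau> \<zeta> = 0"
  unfolding U_phi0_sq_ft_def using conv_eq_0[OF U_phi0_ft_eq_0 U_phi0_ft_eq_0] by simp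

lemma bounded_compact_support_U_phi0_sq_ft: "bounded_compact_support (U_phi0_sq_ft N R \<tau>)"
  by (rule bounded_compact_supportI[OF _ norm_U_phi0_sq_ft_le U_phi0_sq_ft_eq_0]) measurable

lemma lipschitz_U_phi0_sq_ft:
  "(R\<^sup>2 * (8 + 4 * \<bar>\<tau>\<bar>) / (2 * pi))-lipschitz_on UNIV (U_phi0_sq_ft N R \<tau>)"
proof -
  have "(\<bar>R\<bar> * (\<bar>R\<bar> * (8 + 4 * \<bar>\<tau>\<bar>)))-lipschitz_on UNIV (conv (U_phi0_ft N R \<tau>) (U_phi0_ft N R \<tau>))"
    by (rule lipschitz_conv[OF bounded_compact_support_U_phi0_ft bounded_compact_support_U_phi0_ft
          norm_U_phi0_ft_le integral_norm_U_phi0_ft_shift_diff_le])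
  then have "(\<bar>1 / (2 * pi)\<bar> * (\<bar>R\<bar> * (\<bar>R\<bar> * (8 + 4 * \<bar>\<tau>\<bar>))))-lipschitz_on UNIV
      (\<lambda>\<zeta>. (1 / (2 * pi)) *\<^sub>R conv (U_phi0_ft N R \<tau>) (U_phi0_ft N R \<tau>) \<zeta>)"
    by (rule lipschitz_on_cmult)
  moreover have "\<bar>1 / (2 * pi)\<bar> * (\<bar>R\<bar> * (\<bar>R\<bar> * (8 + 4 * \<bar>\<tau>\<bar>))) = R\<^sup>2 * (8 + 4 * \<bar>\<tau>\<bar>) / (2 * pi)"
    by (simp only: mult.assoc[symmetric] abs_mult_self_eq power2_eq_square) simp
  moreover have "(\<lambda>\<zeta>. (1 / (2 * pi)) *\<^sub>R conv (U_phi0_ft N R \<tau>) (U_phi0_ft N R \<tau>) \<zeta>) = U_phi0_sq_ft N R \<tau>"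
    by (simp add: U_phi0_sq_ft_def[abs_def] scaleR_conv_of_real)
  ultimately show ?thesis by (simp only:)
qed

lemma U_phi0_sq_eq:
  "(\<lambda>y. U \<tau> (phi0 N R) y * U \<tau> (phi0 N R) y) = ifourier_integral (U_phi0_sq_ft N R \<tau>)"
  unfolding U_phi0_eq U_phi0_sq_ft_def[abs_def]
  by (intro ext ifourier_integral_mult bounded_compact_support_U_phi0_ft)

lemma phiD_U_phi0_sq_eq:
  "phiD (\<lambda>y. U \<tau> (phi0 N R) y * U \<tau> (phi0 N R) y) =
    ifourier_integral (\<lambda>\<zeta>. complex_of_real (dispersion \<zeta>) * U_phi0_sq_ft N R \<tau> \<zeta>)"
  unfolding U_phi0_sq_eq phiD_def
proof (rule fmult_eq_ifourier_integral[where E="{}", OF bounded_compact_support_U_phi0_sq_ft _ _ _ norm_of_real_dispersion_le])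
  show "fourier (ifourier_integral (U_phi0_sq_ft N R \<tau>)) \<xi> = U_phi0_sq_ft N R \<tau> \<xi>" for \<xi>
    by (rule fourier_ifourier_integral_lipschitz[OF bounded_compact_support_U_phi0_sq_ft lipschitz_U_phi0_sq_ft])
qed auto

lemma bounded_compact_support_dispersion_mult_U_phi0_sq_ft:
  "bounded_compact_support (\<lambda>\<zeta>. complex_of_real (dispersion \<zeta>) * U_phi0_sq_ft N R \<tau> \<zeta>)"
  by (rule bounded_compact_support_mult[OF bounded_compact_support_U_phi0_sq_ft _ norm_of_real_dispersion_le]) auto

lemma norm_dispersion_mult_U_phi0_sq_ft_le:
  "cmod (complex_of_real (dispersion \<zeta>) * U_phi0_sq_ft N R \<tau> \<zeta>) \<le> 1/2 * (R\<^sup>2 * (\<bar>N\<bar> + 1) / pi)"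
  unfolding norm_mult by (rule mult_mono[OF norm_of_real_dispersion_le norm_U_phi0_sq_ft_le]) auto

lemma lipschitz_dispersion_mult_U_phi0_sq_ft:
  "(1/2 * (R\<^sup>2 * (8 + 4 * \<bar>\<tau>\<bar>) / (2 * pi)) + R\<^sup>2 * (\<bar>N\<bar> + 1) / pi * 1)-lipschitz_on UNIV
    (\<lambda>\<zeta>. complex_of_real (dispersion \<zeta>) * U_phi0_sq_ft N R \<tau> \<zeta>)"
proof (rule lipschitz_on_mult_bounded[OF _ lipschitz_U_phi0_sq_ft])
  show "1-lipschitz_on UNIV (\<lambda>\<zeta>. complex_of_real (dispersion \<zeta>))"
  proof (rule lipschitz_onI)
    show "dist (complex_of_real (dispersion x)) (complex_of_real (dispersion y)) \<le> 1 * dist x y" for x y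
      using lipschitz_onD[OF lipschitz_dispersion[of UNIV]] by simp
  qed simp
qed (use norm_of_real_dispersion_le norm_U_phi0_sq_ft_le in auto)

definition duhamel_integrand_ft :: "real \<Rightarrow> real \<Rightarrow> real \<Rightarrow> real \<Rightarrow> real \<Rightarrow> complex" where
  "duhamel_integrand_ft N R t \<tau> \<zeta> =
    cis ((t - \<tau>) * dispersion \<zeta>) * (complex_of_real (dispersion \<zeta>) * U_phi0_sq_ft N R \<tau> \<zeta>)"

lemma borel_measurable_duhamel_integrand_ft[measurable (raw)]:
  assumes [measurable]: "f \<in> borel_measurable M" "g \<in> borel_measurable M"
  shows "(\<lambda>w. duhamel_integrand_ft N R t (f w) (g w)) \<in> borel_measurable M"
proof -
  have [measurable]: "(\<lambda>w. dispersion (g w)) \<in> borel_measurable M"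
    by (rule measurable_compose[OF assms(2)]) measurable
  show ?thesis unfolding duhamel_integrand_ft_def by measurable
qed

lemma norm_duhamel_integrand_ft_le: "cmod (duhamel_integrand_ft N R t \<tau> \<zeta>) \<le> R\<^sup>2 * (\<bar>N\<bar> + 1) / (2 * pi)"
  using norm_dispersion_mult_U_phi0_sq_ft_le[of \<zeta> N R \<tau>] by (simp add: duhamel_integrand_ft_def norm_mult)

lemma duhamel_integrand_ft_eq_0: "\<bar>\<zeta>\<bar> > 2 * (\<bar>N\<bar> + 1) \<Longrightarrow> duhamel_integrand_ft N R t \<tau> \<zeta> = 0"
  by (simp add: duhamel_integrand_ft_def U_phi0_sq_ft_eq_0)

lemma lipschitz_duhamel_integrand_ft:
  obtains K where "\<And>\<tau>. \<tau> \<in> {0..t} \<Longrightarrow> K-lipschitz_on UNIV (duhamel_integrand_ft N R t \<tau>)"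
proof -
  define C where "C = R\<^sup>2 * (\<bar>N\<bar> + 1) / pi"
  define K where "K = 1/2 * (R\<^sup>2 * (8 + 4 * t) / (2 * pi)) + C + 1/2 * C * t"
  have "K-lipschitz_on UNIV (duhamel_integrand_ft N R t \<tau>)" if \<tau>: "\<tau> \<in> {0..t}" for \<tau>
  proof -
    have lip: "(1 * (1/2 * (R\<^sup>2 * (8 + 4 * \<bar>\<tau>\<bar>) / (2 * pi)) + C * 1) + 1/2 * C * \<bar>t - \<tau>\<bar>)-lipschitz_on UNIV
        (duhamel_integrand_ft N R t \<tau>)"
      unfolding duhamel_integrand_ft_def[abs_def] C_def
      by (rule lipschitz_on_mult_bounded[OF lipschitz_cis_dispersion lipschitz_dispersion_mult_U_phi0_sq_ft])
         (use norm_dispersion_mult_U_phi0_sq_ft_le in auto)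
    have le1: "1/2 * (R\<^sup>2 * (8 + 4 * \<bar>\<tau>\<bar>) / (2 * pi)) \<le> 1/2 * (R\<^sup>2 * (8 + 4 * t) / (2 * pi))"
      using \<tau> by (auto intro!: divide_right_mono mult_left_mono)
    have "\<bar>t - \<tau>\<bar> \<le> t" using \<tau> by auto
    then have le2: "1/2 * C * \<bar>t - \<tau>\<bar> \<le> 1/2 * C * t" by (rule mult_left_mono) (simp add: C_def)
    have "1 * (1/2 * (R\<^sup>2 * (8 + 4 * \<bar>\<tau>\<bar>) / (2 * pi)) + C * 1) + 1/2 * C * \<bar>t - \<tau>\<bar> \<le> K"
      unfolding K_def by (simp only: mult_1_left mult_1_right) (rule add_mono[OF add_mono[OF le1 order_refl] le2])
    then show ?thesis by (rule lipschitz_on_le[OF lip])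
  qed
  then show ?thesis by (rule that)
qed

lemma U_phiD_U_phi0_sq_eq:
  "U (t - \<tau>) (phiD (\<lambda>y. U \<tau> (phi0 N R) y * U \<tau> (phi0 N R) y)) = ifourier_integral (duhamel_integrand_ft N R t \<tau>)"
  unfolding phiD_U_phi0_sq_eq unfolding U_def duhamel_integrand_ft_def[abs_def]
  by (rule fmult_eq_ifourier_integral[where E="{}" and D=1, OF bounded_compact_support_dispersion_mult_U_phi0_sq_ft])
     (auto intro: fourier_ifourier_integral_lipschitz[OF bounded_compact_support_dispersion_mult_U_phi0_sq_ft
        lipschitz_dispersion_mult_U_phi0_sq_ft])

definition duhamel_ft :: "real \<Rightarrow> real \<Rightarrow> real \<Rightarrow> real \<Rightarrow> complex" where
  "duhamel_ft N R t \<zeta> = (LINT \<tau>:{0..t}|lborel. duhamel_integrand_ft N R t \<tau> \<zeta>)"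

lemma borel_measurable_duhamel_ft[measurable]: "duhamel_ft N R t \<in> borel_measurable borel"
  unfolding duhamel_ft_def[abs_def] set_lebesgue_integral_def by measurable

lemma duhamel_ft_eq_0: "\<bar>\<zeta>\<bar> > 2 * (\<bar>N\<bar> + 1) \<Longrightarrow> duhamel_ft N R t \<zeta> = 0"
  by (simp add: duhamel_ft_def duhamel_integrand_ft_eq_0)

lemma norm_duhamel_ft_le:
  assumes "0 \<le> t"
  shows "cmod (duhamel_ft N R t \<zeta>) \<le> R\<^sup>2 * (\<bar>N\<bar> + 1) / (2 * pi) * t"
proof -
  have "cmod (duhamel_ft N R t \<zeta>) \<le> R\<^sup>2 * (\<bar>N\<bar> + 1) / (2 * pi) * (t - 0)"
    unfolding duhamel_ft_def
    by (rule set_integral_norm_le[OF _ norm_duhamel_integrand_ft_le assms]) measurable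
  then show ?thesis by simp
qed

lemma bounded_compact_support_duhamel_ft: "0 \<le> t \<Longrightarrow> bounded_compact_support (duhamel_ft N R t)"
  by (rule bounded_compact_supportI[OF _ norm_duhamel_ft_le duhamel_ft_eq_0]) auto

lemma lipschitz_duhamel_ft:
  assumes "0 \<le> t"
  obtains K where "K-lipschitz_on UNIV (duhamel_ft N R t)"
proof -
  obtain K where K: "\<And>\<tau>. \<tau> \<in> {0..t} \<Longrightarrow> K-lipschitz_on UNIV (duhamel_integrand_ft N R t \<tau>)"
    using lipschitz_duhamel_integrand_ft by blast
  have "(K * (t - 0))-lipschitz_on UNIV (duhamel_ft N R t)"
    unfolding duhamel_ft_def[abs_def]
    by (rule lipschitz_set_integral[OF _ K norm_duhamel_integrand_ft_le assms]) measurable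
  then show ?thesis by (rule that)
qed

lemma U2_phi0_eq: "U2 (phi0 N R) T = ifourier_integral (\<lambda>\<zeta>. - (\<i> / 2) * duhamel_ft N R T \<zeta>)"
proof
  fix x
  have "duhamel (\<lambda>\<tau>. U \<tau> (phi0 N R)) (\<lambda>\<tau>. U \<tau> (phi0 N R)) T x =
      ifourier_integral (duhamel_ft N R T) x"
    unfolding duhamel_def U_phiD_U_phi0_sq_eq duhamel_ft_def[abs_def]
    by (rule set_integral_ifourier_integral[OF _ norm_duhamel_integrand_ft_le duhamel_integrand_ft_eq_0])
       measurable
  then show "U2 (phi0 N R) T x = ifourier_integral (\<lambda>\<zeta>. - (\<i> / 2) * duhamel_ft N R T \<zeta>) x"
    unfolding U2_def by (simp add: ifourier_integral_cmult)
qed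

lemma box_U2_phi0_eq:
  assumes "sigma \<rho> n \<in> borel_measurable borel" "\<And>\<xi>. \<bar>sigma \<rho> n \<xi>\<bar> \<le> 1" "0 \<le> T"
  shows "box \<rho> n (U2 (phi0 N R) T) =
    ifourier_integral (\<lambda>\<zeta>. complex_of_real (sigma \<rho> n \<zeta>) * (- (\<i> / 2) * duhamel_ft N R T \<zeta>))"
proof -
  have bcs: "bounded_compact_support (\<lambda>\<zeta>. - (\<i> / 2) * duhamel_ft N R T \<zeta>)"
    by (rule bounded_compact_support_mult[OF bounded_compact_support_duhamel_ft[OF assms(3)], where D="1/2"]) auto
  obtain K where "K-lipschitz_on UNIV (duhamel_ft N R T)"
    using lipschitz_duhamel_ft[OF assms(3)] by blast
  then have lip: "(cmod (- (\<i> / 2)) * K)-lipschitz_on UNIV (\<lambda>\<zeta>. - (\<i> / 2) * duhamel_ft N R T \<zeta>)"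
    by (rule lipschitz_on_mult_left)
  show ?thesis
    unfolding box_def U2_phi0_eq
    by (rule fmult_eq_ifourier_integral[where E="{}" and D=1, OF bcs])
       (use assms(1,2) fourier_ifourier_integral_lipschitz[OF bcs lip] in auto)
qed

section \<open>The frequency localisation \<open>sigma \<rho> n\<close>\<close>

context
  fixes \<rho> :: "real \<Rightarrow> real"
  assumes adm: "admissible_rho \<rho>"
begin

lemma borel_measurable_admissible_rho[measurable]: "\<rho> \<in> borel_measurable borel"
proof -
  have "\<rho> differentiable (at x)" for x
    using adm unfolding admissible_rho_def schwartz_def by (metis funpow_0)
  then have "continuous_on UNIV \<rho>"
    by (simp add: continuous_at_imp_continuous_on differentiable_imp_continuous_within)
  then show ?thesis by (rule borel_measurable_continuous_onI)
qed

lemma admissible_rho_bounds: "0 \<le> \<rho> x" "\<rho> x \<le> 1"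
  using adm by (auto simp: admissible_rho_def)

lemma admissible_rho_eq_1: "\<bar>x\<bar> \<le> 1/2 \<Longrightarrow> \<rho> x = 1"
  using adm by (auto simp: admissible_rho_def)

lemma admissible_rho_eq_0: "\<bar>x\<bar> \<ge> 1 \<Longrightarrow> \<rho> x = 0"
  using adm by (auto simp: admissible_rho_def)

lemma infsum_admissible_rho_shifts:
  "(\<Sum>\<^sub>\<infinity>l::int. \<rho> (\<xi> - of_int l)) = \<rho> (\<xi> - of_int \<lfloor>\<xi>\<rfloor>) + \<rho> (\<xi> - of_int \<lfloor>\<xi>\<rfloor> - 1)"
proof -
  let ?F = "{\<lfloor>\<xi>\<rfloor>, \<lfloor>\<xi>\<rfloor> + 1}"
  have "(\<Sum>\<^sub>\<infinity>l::int. \<rho> (\<xi> - of_int l)) = (\<Sum>\<^sub>\<infinity>l\<in>?F. \<rho> (\<xi> - of_int l))"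
  proof (rule infsum_cong_neutral)
    fix l assume "l \<in> UNIV - ?F"
    then have "l \<le> \<lfloor>\<xi>\<rfloor> - 1 \<or> l \<ge> \<lfloor>\<xi>\<rfloor> + 2" by auto
    then have "\<bar>\<xi> - of_int l\<bar> \<ge> 1"
    proof
      assume "l \<le> \<lfloor>\<xi>\<rfloor> - 1"
      then have "of_int l \<le> of_int \<lfloor>\<xi>\<rfloor> - (1::real)" by linarith
      then show ?thesis using of_int_floor_le[of \<xi>] by linarith
    next
      assume "l \<ge> \<lfloor>\<xi>\<rfloor> + 2"
      then have "of_int l \<ge> of_int \<lfloor>\<xi>\<rfloor> + (2::real)" by linarith
      then show ?thesis using real_of_int_floor_add_one_gt[of \<xi>] by linarith
    qed
    then show "\<rho> (\<xi> - of_int l) = 0" by (rule admissible_rho_eq_0)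
  qed auto
  also have "\<dots> = \<rho> (\<xi> - of_int \<lfloor>\<xi>\<rfloor>) + \<rho> (\<xi> - of_int \<lfloor>\<xi>\<rfloor> - 1)"
    by (simp add: algebra_simps)
  finally show ?thesis .
qed

lemma admissible_rho_shifts_ge_1: "1 \<le> \<rho> (\<xi> - of_int \<lfloor>\<xi>\<rfloor>) + \<rho> (\<xi> - of_int \<lfloor>\<xi>\<rfloor> - 1)"
proof (cases "\<xi> - of_int \<lfloor>\<xi>\<rfloor> \<le> 1/2")
  case True
  then have "\<rho> (\<xi> - of_int \<lfloor>\<xi>\<rfloor>) = 1" using of_int_floor_le[of \<xi>] by (intro admissible_rho_eq_1) auto
  then show ?thesis using admissible_rho_bounds by (simp add: add_increasing2)
next
  case False
  then have "\<bar>\<xi> - of_int \<lfloor>\<xi>\<rfloor> - 1\<bar> \<le> 1/2"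
    unfolding abs_le_iff using real_of_int_floor_add_one_gt[of \<xi>] by linarith
  then have "\<rho> (\<xi> - of_int \<lfloor>\<xi>\<rfloor> - 1) = 1" by (rule admissible_rho_eq_1)
  then show ?thesis using admissible_rho_bounds by (simp add: add_increasing)
qed

lemma sigma_eq: "sigma \<rho> n \<xi> = \<rho> (\<xi> - of_int n) / (\<rho> (\<xi> - of_int \<lfloor>\<xi>\<rfloor>) + \<rho> (\<xi> - of_int \<lfloor>\<xi>\<rfloor> - 1))"
  unfolding sigma_def infsum_admissible_rho_shifts ..

lemma borel_measurable_sigma: "sigma \<rho> n \<in> borel_measurable borel"
  unfolding sigma_eq[abs_def] by measurable

lemma sigma_nonneg: "0 \<le> sigma \<rho> n \<xi>"
  unfolding sigma_eq using admissible_rho_bounds admissible_rho_shifts_ge_1[of \<xi>] by simp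

lemma sigma_le_1: "sigma \<rho> n \<xi> \<le> 1"
  unfolding sigma_eq using admissible_rho_shifts_ge_1[of \<xi>] admissible_rho_bounds[of "\<xi> - of_int n"]
  by (auto simp: divide_le_eq)

lemma sigma_eq_0: "\<bar>\<xi> - of_int n\<bar> \<ge> 1 \<Longrightarrow> sigma \<rho> n \<xi> = 0"
  unfolding sigma_eq by (simp add: admissible_rho_eq_0)

lemma sigma_ge_half: "\<bar>\<xi> - of_int n\<bar> \<le> 1/2 \<Longrightarrow> 1/2 \<le> sigma \<rho> n \<xi>"
proof -
  assume "\<bar>\<xi> - of_int n\<bar> \<le> 1/2"
  then have "\<rho> (\<xi> - of_int n) = 1" by (rule admissible_rho_eq_1)
  moreover have "\<rho> (\<xi> - of_int \<lfloor>\<xi>\<rfloor>) + \<rho> (\<xi> - of_int \<lfloor>\<xi>\<rfloor> - 1) \<le> 2"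
    using admissible_rho_bounds[of "\<xi> - of_int \<lfloor>\<xi>\<rfloor>"] admissible_rho_bounds[of "\<xi> - of_int \<lfloor>\<xi>\<rfloor> - 1"] by linarith
  moreover have "0 < \<rho> (\<xi> - of_int \<lfloor>\<xi>\<rfloor>) + \<rho> (\<xi> - of_int \<lfloor>\<xi>\<rfloor> - 1)"
    using admissible_rho_shifts_ge_1[of \<xi>] by linarith
  ultimately show ?thesis unfolding sigma_eq by (simp add: le_divide_eq)
qed

end

section \<open>Lower bound for the frequency-1 piece\<close>

lemma cos_ge_half:
  fixes \<theta> :: real
  assumes "\<bar>\<theta>\<bar> \<le> 1"
  shows "1/2 \<le> cos \<theta>"
proof -
  have "\<bar>sin (\<theta>/2)\<bar> \<le> 1/2" using abs_sin_x_le_abs_x[of "\<theta>/2"] assms by simp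
  then have "sin (\<theta>/2) ^ 2 \<le> (1/2) ^ 2" by (metis abs_ge_zero power2_abs power_mono)
  then show ?thesis using cos_double_sin[of "\<theta>/2"] by (simp add: power_divide)
qed

lemma Re_integral_mult_cis_ge:
  fixes g \<theta> :: "real \<Rightarrow> real"
  assumes g: "integrable lborel g" "\<And>a. 0 \<le> g a" and \<theta>: "\<theta> \<in> borel_measurable borel" "\<And>a. \<bar>\<theta> a\<bar> \<le> 1"
  shows "1/2 * (LBINT a. g a) \<le> Re (LINT a|lborel. complex_of_real (g a) * cis (\<theta> a))"
proof -
  have gm[measurable]: "g \<in> borel_measurable borel" using g(1) by simp
  have "integrable lborel (\<lambda>a. complex_of_real (g a) * cis (\<theta> a))"
    by (rule Bochner_Integration.integrable_bound[OF g(1)]) (use \<theta>(1) in \<open>simp_all add: norm_mult\<close>)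
  then have "Re (LINT a|lborel. complex_of_real (g a) * cis (\<theta> a)) = (LBINT a. g a * cos (\<theta> a))"
    by (simp flip: integral_Re)
  moreover have "(LBINT a. 1/2 * g a) \<le> (LBINT a. g a * cos (\<theta> a))"
  proof (rule integral_mono)
    show "integrable lborel (\<lambda>a. g a * cos (\<theta> a))"
      by (rule Bochner_Integration.integrable_bound[OF g(1)]) (use \<theta>(1) in \<open>simp_all add: abs_mult mult_left_le\<close>)
    show "1/2 * g a \<le> g a * cos (\<theta> a)" for a
      using mult_left_mono[OF cos_ge_half[OF \<theta>(2)] g(2)] by (simp add: mult.commute)
  qed (use g(1) in simp)
  ultimately show ?thesis by simp
qed

definition I_N_conv :: "real \<Rightarrow> real \<Rightarrow> real" where
  "I_N_conv N \<zeta> = (LBINT a. indicator (I_N N) a * indicator (I_N N) (\<zeta> - a))"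

lemma integrable_I_N_conv_integrand:
  "integrable lborel (\<lambda>a. indicator (I_N N) a * indicator (I_N N) (\<zeta> - a) :: real)"
  by (rule integrable_bounded_compact_support[where C=1 and M="\<bar>N\<bar> + 1"])
     (auto simp: indicator_def dest: notin_I_N)

lemma I_N_conv_nonneg: "0 \<le> I_N_conv N \<zeta>"
  unfolding I_N_conv_def by (rule integral_nonneg_AE) auto

lemma I_N_conv_ge_1:
  assumes "0 \<le> \<zeta>" "\<zeta> \<le> 1"
  shows "1 \<le> I_N_conv N \<zeta>"
proof -
  have "(LBINT a. indicator {\<zeta>+N-1..N+1} a) \<le> I_N_conv N \<zeta>"
    unfolding I_N_conv_def
  proof (rule integral_mono[OF _ integrable_I_N_conv_integrand])
    show "integrable lborel (indicator {\<zeta>+N-1..N+1} :: real \<Rightarrow> real)"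
      by (simp add: emeasure_lborel_Icc_eq)
    show "indicator {\<zeta>+N-1..N+1} a \<le> (indicator (I_N N) a * indicator (I_N N) (\<zeta> - a) :: real)" for a
      using assms by (auto simp: indicator_def I_N_def)
  qed
  then show ?thesis using assms by simp
qed

lemma Re_duhamel_integrand_ft_cis_ge:
  assumes \<zeta>: "0 \<le> \<zeta>" "\<zeta> \<le> 2" and \<tau>: "0 \<le> \<tau>" "\<tau> \<le> t" and t: "t \<le> 1/4" and x: "\<bar>x\<bar> \<le> 1/8"
  shows "dispersion \<zeta> * R\<^sup>2 / (4 * pi) * I_N_conv N \<zeta> \<le> Re (duhamel_integrand_ft N R t \<tau> \<zeta> * cis (x * \<zeta>))"
proof -
  define \<theta> where "\<theta> a = (t - \<tau>) * dispersion \<zeta> + x * \<zeta> + \<tau> * (dispersion a + dispersion (\<zeta> - a))" for a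
  define g where "g a = R\<^sup>2 * (indicator (I_N N) a * indicator (I_N N) (\<zeta> - a))" for a
  define \<alpha> where "\<alpha> = (t - \<tau>) * dispersion \<zeta> + x * \<zeta>"
  have pointwise: "cis \<alpha> * (U_phi0_ft N R \<tau> a * U_phi0_ft N R \<tau> (\<zeta> - a)) = complex_of_real (g a) * cis (\<theta> a)" for a
    by (simp add: U_phi0_ft_def phi0_ft_def g_def \<theta>_def \<alpha>_def cis_mult power2_eq_square algebra_simps)
  have "duhamel_integrand_ft N R t \<tau> \<zeta> * cis (x * \<zeta>) =
      complex_of_real (dispersion \<zeta> / (2 * pi)) * (cis \<alpha> * (LINT a|lborel. U_phi0_ft N R \<tau> a * U_phi0_ft N R \<tau> (\<zeta> - a)))"
    by (simp add: duhamel_integrand_ft_def U_phi0_sq_ft_def conv_def \<alpha>_def cis_mult field_simps)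
  also have "cis \<alpha> * (LINT a|lborel. U_phi0_ft N R \<tau> a * U_phi0_ft N R \<tau> (\<zeta> - a)) =
      (LINT a|lborel. complex_of_real (g a) * cis (\<theta> a))"
    by (simp flip: pointwise)
  finally have eq: "duhamel_integrand_ft N R t \<tau> \<zeta> * cis (x * \<zeta>) =
      complex_of_real (dispersion \<zeta> / (2 * pi)) * (LINT a|lborel. complex_of_real (g a) * cis (\<theta> a))" .
  have "\<bar>\<theta> a\<bar> \<le> 1" for a
  proof -
    have d: "\<bar>dispersion \<zeta>\<bar> \<le> 1/2" "\<bar>dispersion a\<bar> \<le> 1/2" "\<bar>dispersion (\<zeta> - a)\<bar> \<le> 1/2"
      by (rule abs_dispersion_le)+
    have "\<bar>(t - \<tau>) * dispersion \<zeta>\<bar> \<le> 1/4 * (1/2)"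
      unfolding abs_mult by (rule mult_mono) (use \<tau> t d in auto)
    moreover have "\<bar>x * \<zeta>\<bar> \<le> 1/8 * 2" unfolding abs_mult by (rule mult_mono) (use x \<zeta> in auto)
    moreover have "\<bar>\<tau> * (dispersion a + dispersion (\<zeta> - a))\<bar> \<le> 1/4 * 1"
      unfolding abs_mult by (rule mult_mono) (use \<tau> t d in auto)
    ultimately show ?thesis unfolding \<theta>_def by linarith
  qed
  then have "1/2 * (LBINT a. g a) \<le> Re (LINT a|lborel. complex_of_real (g a) * cis (\<theta> a))"
    by (intro Re_integral_mult_cis_ge) (auto simp: g_def \<theta>_def integrable_I_N_conv_integrand)
  then have "R\<^sup>2 / 2 * I_N_conv N \<zeta> \<le> Re (LINT a|lborel. complex_of_real (g a) * cis (\<theta> a))"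
    by (simp add: g_def I_N_conv_def)
  from mult_left_mono[OF this, of "dispersion \<zeta> / (2 * pi)"] show ?thesis
    unfolding eq using dispersion_nonneg[OF \<zeta>(1)] by (simp add: field_simps)
qed

lemma Re_duhamel_ft_cis_ge:
  assumes \<zeta>: "0 \<le> \<zeta>" "\<zeta> \<le> 2" and t: "0 \<le> t" "t \<le> 1/4" and x: "\<bar>x\<bar> \<le> 1/8"
  shows "t * (dispersion \<zeta> * R\<^sup>2 / (4 * pi) * I_N_conv N \<zeta>) \<le> Re (duhamel_ft N R t \<zeta> * cis (x * \<zeta>))"
proof -
  define c where "c = dispersion \<zeta> * R\<^sup>2 / (4 * pi) * I_N_conv N \<zeta>"
  define f where "f \<tau> = indicator {0..t} \<tau> *\<^sub>R (duhamel_integrand_ft N R t \<tau> \<zeta> * cis (x * \<zeta>))" for \<tau>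
  have fi: "integrable lborel f"
  proof (rule integrable_bounded_compact_support[where C="R\<^sup>2 * (\<bar>N\<bar> + 1) / (2 * pi)" and M="\<bar>t\<bar>"])
    show "f \<in> borel_measurable borel" unfolding f_def by measurable
    show "norm (f \<tau>) \<le> R\<^sup>2 * (\<bar>N\<bar> + 1) / (2 * pi)" for \<tau>
      using norm_duhamel_integrand_ft_le[of N R t \<tau> \<zeta>] by (auto simp: f_def indicator_def norm_mult)
  qed (auto simp: f_def indicator_def)
  have "duhamel_ft N R t \<zeta> * cis (x * \<zeta>) = (LINT \<tau>|lborel. f \<tau>)"
    unfolding duhamel_ft_def set_lebesgue_integral_def f_def
    by (simp add: scaleR_conv_of_real mult.assoc flip: integral_mult_left_zero)
  then have "Re (duhamel_ft N R t \<zeta> * cis (x * \<zeta>)) = (LBINT \<tau>. Re (f \<tau>))"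
    using integral_Re[OF fi] by simp
  also have "(LBINT \<tau>. c * indicator {0..t} \<tau>) \<le> \<dots>"
  proof (rule integral_mono)
    show "integrable lborel (\<lambda>\<tau>. c * indicator {0..t} \<tau>)"
      by (intro integrable_mult_right integrable_real_indicator) (simp_all add: emeasure_lborel_Icc_eq)
    show "integrable lborel (\<lambda>\<tau>. Re (f \<tau>))" using fi by simp
    show "c * indicator {0..t} \<tau> \<le> Re (f \<tau>)" for \<tau>
      using Re_duhamel_integrand_ft_cis_ge[OF \<zeta>, of \<tau> t x R N] t x by (auto simp: f_def c_def indicator_def)
  qed
  also have "(LBINT \<tau>. c * indicator {0..t} \<tau>) = t * c" using t by simp
  finally show ?thesis unfolding c_def .
qed

lemma sigma_1_Re_duhamel_ft_cis_ge:
  assumes adm: "admissible_rho \<rho>" and t: "0 \<le> t" "t \<le> 1/4" and x: "\<bar>x\<bar> \<le> 1/8"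
  shows "t * R\<^sup>2 / (20 * pi) * indicator {1/2..1} \<zeta> \<le> sigma \<rho> 1 \<zeta> * Re (duhamel_ft N R t \<zeta> * cis (x * \<zeta>))"
proof (cases "0 \<le> \<zeta> \<and> \<zeta> \<le> 2")
  case False
  then have "sigma \<rho> 1 \<zeta> = 0" by (intro sigma_eq_0[OF adm]) auto
  moreover have "\<zeta> \<notin> {1/2..1}" using False by auto
  ultimately show ?thesis by simp
next
  case True
  have Re: "t * (dispersion \<zeta> * R\<^sup>2 / (4 * pi) * I_N_conv N \<zeta>) \<le> Re (duhamel_ft N R t \<zeta> * cis (x * \<zeta>))"
    using True t x by (intro Re_duhamel_ft_cis_ge) auto
  have nonneg: "0 \<le> t * (dispersion \<zeta> * R\<^sup>2 / (4 * pi) * I_N_conv N \<zeta>)"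
    using True t dispersion_nonneg[of \<zeta>] I_N_conv_nonneg[of N \<zeta>] by simp
  show ?thesis
  proof (cases "\<zeta> \<in> {1/2..1}")
    case True
    then have "1/2 \<le> sigma \<rho> 1 \<zeta>" by (intro sigma_ge_half[OF adm]) auto
    moreover have "t * (2/5 * R\<^sup>2 / (4 * pi) * 1) \<le> t * (dispersion \<zeta> * R\<^sup>2 / (4 * pi) * I_N_conv N \<zeta>)"
      using True t dispersion_ge[of \<zeta>] I_N_conv_ge_1[of \<zeta> N]
      by (intro mult_left_mono mult_mono divide_right_mono) auto
    ultimately have "1/2 * (t * (2/5 * R\<^sup>2 / (4 * pi) * 1)) \<le> sigma \<rho> 1 \<zeta> * Re (duhamel_ft N R t \<zeta> * cis (x * \<zeta>))"
      using Re t by (intro mult_mono) auto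
    then show ?thesis using True by (simp add: field_simps)
  next
    case False
    then show ?thesis using sigma_nonneg[OF adm] Re nonneg by simp
  qed
qed

lemma norm_box_1_U2_phi0_ge:
  assumes adm: "admissible_rho \<rho>" and t: "0 \<le> t" "t \<le> 1/4" and x: "\<bar>x\<bar> \<le> 1/8"
  shows "t * R\<^sup>2 / (160 * pi\<^sup>2) \<le> cmod (box \<rho> 1 (U2 (phi0 N R) t) x)"
proof -
  define Q where "Q \<zeta> = complex_of_real (sigma \<rho> 1 \<zeta>) * (duhamel_ft N R t \<zeta> * cis (x * \<zeta>))" for \<zeta>
  have [measurable]: "sigma \<rho> 1 \<in> borel_measurable borel" by (rule borel_measurable_sigma[OF adm])
  have sigma_abs: "\<bar>sigma \<rho> 1 \<xi>\<bar> \<le> 1" for \<xi>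
    using sigma_nonneg[OF adm] sigma_le_1[OF adm] by simp
  have Qi: "integrable lborel Q"
  proof (rule integrable_bounded_compact_support[where C="R\<^sup>2 * (\<bar>N\<bar> + 1) / (2 * pi) * t" and M="2 * (\<bar>N\<bar> + 1)"])
    show "Q \<in> borel_measurable borel" unfolding Q_def by measurable
    show "norm (Q \<zeta>) \<le> R\<^sup>2 * (\<bar>N\<bar> + 1) / (2 * pi) * t" for \<zeta>
      using mult_mono[OF sigma_abs norm_duhamel_ft_le[OF t(1)]] by (simp add: Q_def norm_mult)
    show "Q \<zeta> = 0" if "\<bar>\<zeta>\<bar> > 2 * (\<bar>N\<bar> + 1)" for \<zeta> using duhamel_ft_eq_0[OF that] by (simp add: Q_def)
  qed
  have "box \<rho> 1 (U2 (phi0 N R) t) x = - (\<i> / 2) * (LINT \<zeta>|lborel. Q \<zeta>) / (2 * pi)"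
    unfolding box_U2_phi0_eq[OF borel_measurable_sigma[OF adm] sigma_abs t(1)] ifourier_integral_def Q_def
    by (simp add: algebra_simps)
  then have eq: "cmod (box \<rho> 1 (U2 (phi0 N R) t) x) = cmod (LINT \<zeta>|lborel. Q \<zeta>) / (4 * pi)"
    by (simp add: norm_mult norm_divide)
  have "(LBINT \<zeta>. t * R\<^sup>2 / (20 * pi) * indicator {1/2..1::real} \<zeta>) \<le> (LBINT \<zeta>. Re (Q \<zeta>))"
  proof (rule integral_mono)
    show "integrable lborel (\<lambda>\<zeta>. t * R\<^sup>2 / (20 * pi) * indicator {1/2..1::real} \<zeta>)"
      by (intro integrable_mult_right integrable_real_indicator) (simp_all add: emeasure_lborel_Icc_eq less_top[symmetric])
    show "integrable lborel (\<lambda>\<zeta>. Re (Q \<zeta>))" using Qi by simp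
    show "t * R\<^sup>2 / (20 * pi) * indicator {1/2..1::real} \<zeta> \<le> Re (Q \<zeta>)" for \<zeta>
      using sigma_1_Re_duhamel_ft_cis_ge[OF adm t x, of R \<zeta> N] by (simp add: Q_def)
  qed
  also have "(LBINT \<zeta>. Re (Q \<zeta>)) = Re (LINT \<zeta>|lborel. Q \<zeta>)" using integral_Re[OF Qi] by simp
  also have "\<dots> \<le> cmod (LINT \<zeta>|lborel. Q \<zeta>)" by (rule complex_Re_le_cmod)
  finally have "t * R\<^sup>2 / (40 * pi) / (4 * pi) \<le> cmod (box \<rho> 1 (U2 (phi0 N R) t) x)"
    unfolding eq by (intro divide_right_mono) simp_all
  then show ?thesis by (simp add: power2_eq_square field_simps)
qed

section \<open>Norms\<close>

lemma epowr_mono: "a \<le> b \<Longrightarrow> 0 \<le> p \<Longrightarrow> epowr a p \<le> epowr b p"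
proof (cases "b = \<infinity>")
  case False
  assume "a \<le> b" "0 \<le> p"
  moreover from this False have "a \<noteq> \<infinity>" "enn2real a \<le> enn2real b"
    by (auto simp: top_unique enn2real_mono top.not_eq_extremum)
  ultimately show ?thesis using False by (auto simp: epowr_def intro!: ennreal_leI powr_mono2)
qed (simp add: epowr_def)

lemma epowr_ennreal: "0 \<le> x \<Longrightarrow> epowr (ennreal x) p = ennreal (x powr p)"
  by (simp add: epowr_def)

lemma abs_le_lq_norm:
  assumes "1 \<le> q"
  shows "ennreal \<bar>a n\<bar> \<le> lq_norm q a"
proof (cases "q = \<infinity>")
  case True then show ?thesis by (auto simp: lq_norm_def intro: SUP_upper)
next
  case False
  define p where "p = enn2real q"
  have p1: "1 \<le> p"
    using assms False enn2real_mono[of 1 q] unfolding p_def by (simp add: top.not_eq_extremum)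
  have "ennreal (\<bar>a n\<bar> powr p) = (\<Sum>\<^sub>\<infinity>k\<in>{n}. ennreal (\<bar>a k\<bar> powr p))" by simp
  also have "\<dots> \<le> (\<Sum>\<^sub>\<infinity>k. ennreal (\<bar>a k\<bar> powr p))"
    by (rule infsum_mono_neutral) (auto intro: nonneg_summable_on_complete)
  finally have "epowr (ennreal (\<bar>a n\<bar> powr p)) (1/p) \<le> epowr (\<Sum>\<^sub>\<infinity>k. ennreal (\<bar>a k\<bar> powr p)) (1/p)"
    by (rule epowr_mono) (use p1 in simp)
  moreover have "epowr (ennreal (\<bar>a n\<bar> powr p)) (1/p) = ennreal \<bar>a n\<bar>"
    using p1 by (simp add: epowr_def powr_powr)
  ultimately show ?thesis using False by (simp add: lq_norm_def p_def)
qed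

lemma Lp_norm_mono: "(\<And>x. f x \<le> g x) \<Longrightarrow> 0 \<le> p \<Longrightarrow> Lp_norm p f \<le> Lp_norm p g"
  unfolding Lp_norm_def by (intro epowr_mono nn_integral_mono) simp_all

lemma Lp_norm_box_le_W_norm:
  assumes "1 \<le> q" "0 \<le> p"
  shows "Lp_norm p (\<lambda>x. ennreal (cmod (box \<rho> n f x) * japan n powr s)) \<le> W_norm \<rho> p q s f"
  unfolding W_norm_def
  using abs_le_lq_norm[OF assms(1), of "\<lambda>n. cmod (box \<rho> n f _) * japan n powr s" n] assms(2)
  by (intro Lp_norm_mono) (simp_all add: abs_mult)

lemma Lp_norm_ge_on_interval:
  assumes "0 \<le> c" "a \<le> b" "0 < p" "\<And>x. x \<in> {a..b} \<Longrightarrow> ennreal c \<le> g x"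
  shows "ennreal (c * (b - a) powr (1 / p)) \<le> Lp_norm p g"
proof -
  have "ennreal (c powr p) * indicator {a..b} x \<le> epowr (g x) p" for x
  proof (cases "x \<in> {a..b}")
    case True
    then have "epowr (ennreal c) p \<le> epowr (g x) p" using assms by (intro epowr_mono) auto
    then show ?thesis using True assms(1) by (simp add: epowr_ennreal)
  qed simp
  note pointwise = this
  have "ennreal (c powr p) * ennreal (b - a) = (\<integral>\<^sup>+ x. ennreal (c powr p) * indicator {a..b} x \<partial>lborel)"
    using assms(2) by (simp add: nn_integral_cmult_indicator emeasure_lborel_Icc)
  also have "\<dots> \<le> (\<integral>\<^sup>+ x. epowr (g x) p \<partial>lborel)"
    by (rule nn_integral_mono) (rule pointwise)
  finally have "ennreal (c powr p) * ennreal (b - a) \<le> (\<integral>\<^sup>+ x. epowr (g x) p \<partial>lborel)" .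
  then have "epowr (ennreal (c powr p * (b - a))) (1 / p) \<le> Lp_norm p g"
    unfolding Lp_norm_def using assms(2,3) by (intro epowr_mono) (simp_all add: ennreal_mult)
  then show ?thesis
    using assms by (simp add: epowr_ennreal powr_mult powr_powr)
qed

lemma Lp_norm_box_1_U2_phi0_ge:
  assumes "admissible_rho \<rho>" "0 \<le> T" "T \<le> 1/4"
  shows "ennreal (japan 1 powr s / (320 * pi\<^sup>2) * R\<^sup>2 * T)
    \<le> Lp_norm 2 (\<lambda>x. ennreal (cmod (box \<rho> 1 (U2 (phi0 N R) T) x) * japan 1 powr s))"
proof -
  define c where "c = T * R\<^sup>2 / (160 * pi\<^sup>2) * japan 1 powr s"
  have "ennreal c \<le> ennreal (cmod (box \<rho> 1 (U2 (phi0 N R) T) x) * japan 1 powr s)" if "x \<in> {-1/8..1/8}" for x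
    using norm_box_1_U2_phi0_ge[OF assms, of x R N] that unfolding c_def
    by (intro ennreal_leI mult_right_mono) auto
  then have "ennreal (c * (1/8 - -1/8) powr (1/2)) \<le> Lp_norm 2 (\<lambda>x. ennreal (cmod (box \<rho> 1 (U2 (phi0 N R) T) x) * japan 1 powr s))"
    using assms(2) by (intro Lp_norm_ge_on_interval) (auto simp: c_def)
  moreover have "c * (1/8 - -1/8) powr (1/2) = japan 1 powr s / (320 * pi\<^sup>2) * R\<^sup>2 * T"
    by (simp add: c_def powr_half_sqrt real_sqrt_divide field_simps)
  ultimately show ?thesis by simp
qed

theorem lemma4p6:
  fixes \<rho> :: "real \<Rightarrow> real" and q :: ennreal and s :: real
  assumes "admissible_rho \<rho>" and "1 \<le> q"
  shows "\<exists>T0 > 0. \<exists>N0 \<ge> 2. \<exists>c > 0. \<forall>N R T. N \<ge> N0 \<and> R > 0 \<and> 0 < T \<and> T \<le> T0 \<longrightarrow>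
     W_norm \<rho> 2 q s (U2 (phi0 N R) T)
       \<ge> Lp_norm 2 (\<lambda>x. ennreal (cmod (box \<rho> 1 (U2 (phi0 N R) T) x) * japan 1 powr s))
     \<and> Lp_norm 2 (\<lambda>x. ennreal (cmod (box \<rho> 1 (U2 (phi0 N R) T) x) * japan 1 powr s))
       \<ge> ennreal (c * R\<^sup>2 * T)"
proof -
  let ?c = "japan 1 powr s / (320 * pi\<^sup>2)"
  have "Lp_norm 2 (\<lambda>x. ennreal (cmod (box \<rho> 1 (U2 (phi0 N R) T) x) * japan 1 powr s))
      \<le> W_norm \<rho> 2 q s (U2 (phi0 N R) T)" for N R T
    by (rule Lp_norm_box_le_W_norm[OF assms(2)]) simp
  moreover have "ennreal (?c * R\<^sup>2 * T)
      \<le> Lp_norm 2 (\<lambda>x. ennreal (cmod (box \<rho> 1 (U2 (phi0 N R) T) x) * japan 1 powr s))"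
    if "0 < T" "T \<le> 1/4" for N R T
    using that by (intro Lp_norm_box_1_U2_phi0_ge assms(1)) auto
  ultimately have "\<forall>N R T. N \<ge> 2 \<and> R > 0 \<and> 0 < T \<and> T \<le> 1/4 \<longrightarrow>
     W_norm \<rho> 2 q s (U2 (phi0 N R) T)
       \<ge> Lp_norm 2 (\<lambda>x. ennreal (cmod (box \<rho> 1 (U2 (phi0 N R) T) x) * japan 1 powr s))
     \<and> Lp_norm 2 (\<lambda>x. ennreal (cmod (box \<rho> 1 (U2 (phi0 N R) T) x) * japan 1 powr s))
       \<ge> ennreal (?c * R\<^sup>2 * T)"
    by auto
  moreover have "0 < (1/4::real)" "(2::real) \<le> 2" "0 < ?c" by (simp_all add: japan_def)
  ultimately show ?thesis by blast
qed

end
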